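(* Let $p\geq q\geq 1$ be integers and let $M_{pq}$ denote the real vector space of all real $p\times q$ matrices, identified with $\mathbb{R}^{pq}$ and equipped with the Euclidean inner product $\langle X,Y\rangle=\mathrm{tr}(X^TY)$. Let $\Sigma_{pq}=\{X\in M_{pq}:\det(X^TX)=0\}$ be the determinantal variety, i.e. the set of all $p\times q$ real matrices of rank strictly less than $q$. For each integer $r$ with $0\leq r\leq q-1$, let $Z_r\subset\Sigma_{pq}$ be the stratum consisting of all $p\times q$ real matrices of rank exactly $r$. Then every $Z_r$, $0\leq r\leq q-1$, is a regular (embedded) submanifold of $M_{pq}$ which is minimal in $(M_{pq},\langle\cdot,\cdot\rangle)$, i.e. its mean curvature vector vanishes identically.
   Context: A submanifold of a Euclidean space is minimal if its mean curvature vector (the trace of its second fundamental form with respect to the induced metric) vanishes at every point. *)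

theory Defs
  imports "HOL-Analysis.Analysis"
begin

fun Ck_on :: "nat \<Rightarrow> ('a::euclidean_space \<Rightarrow> 'b::euclidean_space) \<Rightarrow> 'a set \<Rightarrow> bool" where
  "Ck_on 0 f W = continuous_on W f"
| "Ck_on (Suc k) f W =
     (f differentiable_on W \<and> (\<forall>a. Ck_on k (\<lambda>v. frechet_derivative f (at v) a) W))"

definition smooth_on :: "('a::euclidean_space \<Rightarrow> 'b::euclidean_space) \<Rightarrow> 'a set \<Rightarrow> bool" where
  "smooth_on f W \<longleftrightarrow> open W \<and> (\<forall>k. Ck_on k f W)"

definition second_deriv :: "('a::euclidean_space \<Rightarrow> 'b::euclidean_space) \<Rightarrow> 'a \<Rightarrow> 'a \<Rightarrow> 'a \<Rightarrow> 'b" where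
  "second_deriv f u a b = frechet_derivative (\<lambda>v. frechet_derivative f (at v) a) (at u) b"

definition normal_part :: "'a::euclidean_space set \<Rightarrow> 'a \<Rightarrow> 'a" where
  "normal_part T v = (THE n. v - n \<in> T \<and> (\<forall>t\<in>T. inner n t = 0))"

text \<open>A smooth local parametrisation (embedding) of Z around x, with parameter domain
 the relatively open set W \<inter> S of a d-dimensional linear subspace S.\<close>
definition local_param ::
  "'a::euclidean_space set \<Rightarrow> nat \<Rightarrow> 'a \<Rightarrow> 'a set \<Rightarrow> 'a set \<Rightarrow> 'a set \<Rightarrow> ('a \<Rightarrow> 'a) \<Rightarrow> bool" where
  "local_param Z d x S W V \<phi> \<longleftrightarrow>
     subspace S \<and> dim S = d \<and> smooth_on \<phi> W \<and> open V \<and> x \<in> V \<and>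
     \<phi> ` (W \<inter> S) = Z \<inter> V \<and> inj_on \<phi> (W \<inter> S) \<and>
     continuous_on (Z \<inter> V) (inv_into (W \<inter> S) \<phi>) \<and>
     (\<forall>u \<in> W \<inter> S. inj_on (frechet_derivative \<phi> (at u)) S)"

definition regular_submanifold :: "'a::euclidean_space set \<Rightarrow> nat \<Rightarrow> bool" where
  "regular_submanifold Z d \<longleftrightarrow> (\<forall>x\<in>Z. \<exists>S W V \<phi>. local_param Z d x S W V \<phi>)"

text \<open>Mean curvature vector at \<phi> u, computed in the parametrisation \<phi>: for a finite set A \<subseteq> S
 whose image under D\<phi>(u) is an orthonormal basis of the tangent space T = D\<phi>(u) S,
 H = \<Sigma>_{a\<in>A} II(D\<phi> a, D\<phi> a) = \<Sigma>_{a\<in>A} (D^2\<phi>(u)(a,a))^\<perp>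
 (trace of the second fundamental form w.r.t. the induced metric).\<close>
definition minimal_submanifold :: "'a::euclidean_space set \<Rightarrow> bool" where
  "minimal_submanifold Z \<longleftrightarrow> (\<exists>d. regular_submanifold Z d \<and>
     (\<forall>x S W V \<phi> u A. local_param Z d x S W V \<phi> \<and> u \<in> W \<inter> S \<and>
        finite A \<and> A \<subseteq> S \<and> card A = d \<and> inj_on (frechet_derivative \<phi> (at u)) A \<and>
        pairwise orthogonal (frechet_derivative \<phi> (at u) ` A) \<and>
        (\<forall>a\<in>A. norm (frechet_derivative \<phi> (at u) a) = 1)
        \<longrightarrow> (\<Sum>a\<in>A. normal_part (frechet_derivative \<phi> (at u) ` S) (second_deriv \<phi> u a a)) = 0))"

end

theory Submission
  imports Defs "HOL-Library.Landau_Symbols" "HOL-Real_Asymp.Real_Asymp"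
begin

text \<open>
  Let \<open>X\<close> have rank \<open>r\<close>, let \<open>G\<close> be a left inverse of \<open>X\<close> on \<open>(ker X)\<^sup>\<bottom>\<close> with values in
  \<open>(ker X)\<^sup>\<bottom>\<close>, and let \<open>P\<close> be the orthogonal projection onto \<open>ker X\<close>. The quadratic map
  \<open>\<phi>(H) = H (I - P) + H G H P\<close> restricted to the space \<open>T\<close> of matrices mapping \<open>ker X\<close> into
  \<open>im X\<close>, of dimension \<open>r q + (p - r) r\<close>, is a homeomorphism onto a neighbourhood of \<open>X\<close> in the
  stratum with injective differential, its inverse being \<open>Y \<mapsto> Y (I - P) + X \<xi>\<^sub>Y\<close> where
  \<open>\<xi>\<^sub>Y w\<close> is the preimage under \<open>Y\<close> of \<open>Y P w\<close> in \<open>(ker X)\<^sup>\<bottom>\<close>. So the stratum is a regular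
  submanifold with tangent space \<open>T\<close> at \<open>X\<close>.

  For minimality it suffices to compute the normal part of the second fundamental form, i.e. the
  pairing \<open>x \<bullet> (II w)\<close> with \<open>x \<bottom> im X\<close> and \<open>w \<in> ker X\<close>. The rank condition forces, for every
  curve \<open>X + t Y\<^sub>1 + t\<^sup>2/2 Y\<^sub>2 + o(t\<^sup>2)\<close> in the stratum, the identity
  \<open>x \<bullet> Y\<^sub>2 w = 2 x \<bullet> Y\<^sub>1 G Y\<^sub>1 w\<close>. The mean curvature is therefore governed by the trace of
  \<open>H \<mapsto> x \<bullet> H G H w\<close> over an orthonormal basis of \<open>T\<close>, which vanishes because \<open>T\<close> contains the
  rank-one matrices \<open>x c\<^sup>T\<close> with \<open>c \<bottom> ker X\<close>, and these pair with \<open>(G\<^sup>T c) w\<^sup>T\<close> through the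
  factor \<open>c \<bullet> w = 0\<close>.
\<close>

section \<open>Matrices, outer products and orthonormal sets\<close>

definition outer_prod :: "real^'p \<Rightarrow> real^'q \<Rightarrow> real^'q^'p" where
  "outer_prod y z = (\<chi> i j. y$i * z$j)"

lemma outer_prod_mult_vec: "outer_prod y z *v w = (z \<bullet> w) *\<^sub>R y"
  by (simp add: outer_prod_def matrix_vector_mult_def vec_eq_iff inner_vec_def sum_distrib_left mult_ac)

lemma inner_outer_prod: "M \<bullet> outer_prod y z = y \<bullet> (M *v z)"
  by (simp add: outer_prod_def matrix_vector_mult_def inner_vec_def sum_distrib_left mult_ac)

lemma inner_outer_prod_outer_prod: "outer_prod y z \<bullet> outer_prod y' z' = (y \<bullet> y') * (z \<bullet> z')"
  by (simp add: inner_outer_prod outer_prod_mult_vec inner_commute)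

lemma sum_matrix_vector_mult: "finite A \<Longrightarrow> sum f A *v w = (\<Sum>a\<in>A. f a *v w)"
  for f :: "'a \<Rightarrow> real^'q^'p"
  by (induction A rule: finite_induct) (simp_all add: matrix_vector_mult_add_rdistrib)

lemma norm_matrix_vector_mult_le: "norm (M *v w) \<le> norm M * norm w"
  for M :: "real^'q^'p"
proof -
  have row: "(M$i \<bullet> w)\<^sup>2 \<le> (norm (M$i))\<^sup>2 * (norm w)\<^sup>2" for i
  proof -
    have "\<bar>M$i \<bullet> w\<bar>\<^sup>2 \<le> (norm (M$i) * norm w)\<^sup>2"
      by (intro power_mono Cauchy_Schwarz_ineq2) simp
    then show ?thesis by (simp add: power_mult_distrib)
  qed
  have "(norm (M *v w))\<^sup>2 = (\<Sum>i\<in>UNIV. (M$i \<bullet> w)\<^sup>2)"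
    by (simp add: norm_vec_def L2_set_def sum_nonneg matrix_vector_mult_def inner_vec_def)
  also have "\<dots> \<le> (\<Sum>i\<in>UNIV. (norm (M$i))\<^sup>2 * (norm w)\<^sup>2)"
    by (intro sum_mono row)
  also have "\<dots> = (norm M * norm w)\<^sup>2"
    by (simp add: norm_vec_def L2_set_def sum_nonneg sum_distrib_right power_mult_distrib)
  finally show ?thesis by (rule power2_le_imp_le) simp
qed

lemma norm_matrix_le_mult_bound:
  fixes M :: "real^'q^'p"
  assumes "\<And>w. norm (M *v w) \<le> c * norm w"
  shows "norm M \<le> real CARD('p) * real CARD('q) * c"
proof -
  have entry: "\<bar>M$i$j\<bar> \<le> c" for i j
  proof -
    have "M$i$j = (M *v axis j 1)$i" by (simp add: matrix_vector_mult_basis column_def)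
    then have "\<bar>M$i$j\<bar> \<le> norm (M *v axis j 1)" by (metis component_le_norm_cart)
    then show ?thesis using assms[of "axis j 1"] by simp
  qed
  have "norm M \<le> (\<Sum>i\<in>UNIV. norm (M$i))" unfolding norm_vec_def by (rule L2_set_le_sum) simp
  also have "\<dots> \<le> (\<Sum>i\<in>(UNIV::'p set). \<Sum>j\<in>(UNIV::'q set). c)"
    by (intro sum_mono order.trans[OF norm_le_l1_cart]) (simp add: entry)
  finally show ?thesis by simp
qed

lemma inner_matrix_vector_mult_le: "\<bar>x \<bullet> (M *v w)\<bar> \<le> norm x * norm M * norm w"
  for M :: "real^'q^'p"
proof -
  have "\<bar>x \<bullet> (M *v w)\<bar> \<le> norm x * norm (M *v w)" by (rule Cauchy_Schwarz_ineq2)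
  also have "\<dots> \<le> norm x * (norm M * norm w)"
    by (simp add: mult_left_mono norm_matrix_vector_mult_le)
  finally show ?thesis by (simp add: mult.assoc)
qed

lemma inner_matrix_vector_mult3_le:
  fixes A :: "real^'q^'p" and G :: "real^'p^'q" and B :: "real^'q^'p"
  shows "\<bar>x \<bullet> (A *v (G *v (B *v w)))\<bar> \<le> norm x * norm A * norm G * norm B * norm w"
proof -
  have "norm (G *v (B *v w)) \<le> norm G * (norm B * norm w)"
    by (intro order.trans[OF norm_matrix_vector_mult_le] mult_left_mono norm_matrix_vector_mult_le) simp
  then have "norm x * norm A * norm (G *v (B *v w)) \<le> norm x * norm A * (norm G * (norm B * norm w))"
    by (simp add: mult_left_mono)
  with inner_matrix_vector_mult_le[of x A "G *v (B *v w)"] show ?thesis by (simp add: mult_ac)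
qed

definition orthonormal :: "'a::euclidean_space set \<Rightarrow> bool" where
  "orthonormal B \<longleftrightarrow> finite B \<and> pairwise orthogonal B \<and> (\<forall>b\<in>B. norm b = 1)"

lemma orthonormal_inner_sum:
  assumes "orthonormal B" "b \<in> B"
  shows "b \<bullet> (\<Sum>v\<in>B. c v *\<^sub>R v) = c b"
proof -
  have "b \<bullet> (\<Sum>v\<in>B. c v *\<^sub>R v) = (\<Sum>v\<in>B. c v * (b \<bullet> v))"
    by (simp add: inner_sum_right)
  also have "\<dots> = (\<Sum>v\<in>{b}. c v * (b \<bullet> v))"
    using assms by (intro sum.mono_neutral_right) (auto simp: orthonormal_def pairwise_def orthogonal_def)
  also have "\<dots> = c b" using assms by (simp add: orthonormal_def dot_square_norm)
  finally show ?thesis .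
qed

lemma orthonormal_expand: "orthonormal B \<Longrightarrow> z \<in> span B \<Longrightarrow> z = (\<Sum>b\<in>B. (b \<bullet> z) *\<^sub>R b)"
  using orthonormal_basis_expand[of B z] by (simp add: orthonormal_def inner_commute)

lemma orthonormal_independent: "orthonormal B \<Longrightarrow> independent B"
  unfolding orthonormal_def by (rule pairwise_orthogonal_independent) auto

lemma dim_span_orthonormal: "orthonormal B \<Longrightarrow> dim (span B) = card B"
  by (metis dim_eq_card_independent dim_span orthonormal_independent)

lemma orthonormal_parseval:
  assumes "orthonormal B" "z \<in> span B"
  shows "(\<Sum>b\<in>B. (b \<bullet> z) * (b \<bullet> y)) = z \<bullet> y"
proof -
  have "z \<bullet> y = (\<Sum>b\<in>B. (b \<bullet> z) *\<^sub>R b) \<bullet> y" using orthonormal_expand[OF assms] by simp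
  then show ?thesis by (simp add: inner_sum_left)
qed

lemma span_orthonormal_eq:
  assumes "orthonormal B" "B \<subseteq> T" "subspace T" "card B = dim T"
  shows "span B = T"
proof
  show "span B \<subseteq> T" using assms(2,3) by (rule span_minimal)
  show "T \<subseteq> span B"
    using card_eq_dim[OF assms(2,4)] orthonormal_independent[OF assms(1)] assms(1)
    by (simp add: orthonormal_def)
qed

lemma orthonormal_basis_of_subspace:
  fixes S :: "'a::euclidean_space set"
  assumes "subspace S"
  obtains B where "orthonormal B" "span B = S" "card B = dim S"
proof -
  obtain B where B: "B \<subseteq> S" "pairwise orthogonal B" "\<And>x. x \<in> B \<Longrightarrow> norm x = 1"
    "independent B" "card B = dim S" "span B = S"
    by (rule orthonormal_basis_subspace[OF assms]) blast
  then have "orthonormal B" by (auto simp: orthonormal_def finiteI_independent)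
  with B that show ?thesis by blast
qed

lemma orthonormal_Un_orthogonal_comp:
  fixes B1 B2 :: "'a::euclidean_space set"
  assumes o1: "orthonormal B1" and o2: "orthonormal B2"
    and s1: "span B1 = U" and s2: "span B2 = U\<^sup>\<bottom>" and U: "subspace U"
  shows "orthonormal (B1 \<union> B2)" "span (B1 \<union> B2) = UNIV" "B1 \<inter> B2 = {}"
proof -
  have B1U: "B1 \<subseteq> U" and B2U: "B2 \<subseteq> U\<^sup>\<bottom>" using s1 s2 span_superset by blast+
  have cross: "orthogonal a b" if "a \<in> B1" "b \<in> B2" for a b
    using that B1U B2U by (auto simp: orthogonal_comp_def)
  have p1: "pairwise orthogonal B1" and p2: "pairwise orthogonal B2"
    using o1 o2 by (simp_all add: orthonormal_def)
  have "pairwise orthogonal (B1 \<union> B2)"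
  proof (rule pairwiseI)
    fix x y assume x: "x \<in> B1 \<union> B2" and y: "y \<in> B1 \<union> B2" and xy: "x \<noteq> y"
    from x y consider "x \<in> B1" "y \<in> B1" | "x \<in> B1" "y \<in> B2" | "x \<in> B2" "y \<in> B1"
      | "x \<in> B2" "y \<in> B2" by blast
    then show "orthogonal x y"
    proof cases
      case 1 then show ?thesis using p1 xy by (simp add: pairwiseD)
    next
      case 2 then show ?thesis by (rule cross)
    next
      case 3 then show ?thesis using cross orthogonal_commute by metis
    next
      case 4 then show ?thesis using p2 xy by (simp add: pairwiseD)
    qed
  qed
  then show "orthonormal (B1 \<union> B2)" using o1 o2 by (auto simp: orthonormal_def)
  have "b = 0" if "b \<in> B1" "b \<in> B2" for b
    using that B1U B2U orthogonal_Int_0[OF U] by blast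
  then show "B1 \<inter> B2 = {}" using o1 by (fastforce simp: orthonormal_def)
  have "z \<in> span (B1 \<union> B2)" for z
  proof -
    have "z \<in> U + U\<^sup>\<bottom>" using subspace_sum_orthogonal_comp[OF U] by simp
    then obtain a b where "a \<in> U" "b \<in> U\<^sup>\<bottom>" "z = a + b" by (auto simp: set_plus_def)
    then show ?thesis unfolding span_Un using s1 s2 by blast
  qed
  then show "span (B1 \<union> B2) = UNIV" by auto
qed

lemma dim_orthogonal_comp:
  fixes U :: "(real^'n) set"
  assumes "subspace U"
  shows "dim (U\<^sup>\<bottom>) + dim U = CARD('n)"
proof -
  have "{y \<in> UNIV. \<forall>x \<in> U. orthogonal x y} = U\<^sup>\<bottom>" by (auto simp: orthogonal_comp_def)
  then show ?thesis
    using dim_subspace_orthogonal_to_vectors[OF assms subspace_UNIV] by simp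
qed

lemma normal_part:
  fixes T :: "'a::euclidean_space set"
  assumes "subspace T"
  shows "v - normal_part T v \<in> T" "\<And>t. t \<in> T \<Longrightarrow> normal_part T v \<bullet> t = 0"
proof -
  obtain y z where "y \<in> span T" and z: "\<And>w. w \<in> span T \<Longrightarrow> orthogonal z w" and "v = y + z"
    using orthogonal_subspace_decomp_exists[of T v] by blast
  moreover have "span T = T" using assms by (simp add: span_eq_iff)
  ultimately have ex: "v - z \<in> T \<and> (\<forall>t\<in>T. z \<bullet> t = 0)"
    by (auto simp: orthogonal_def)
  have "n = z" if n: "v - n \<in> T \<and> (\<forall>t\<in>T. n \<bullet> t = 0)" for n
  proof -
    have "z - n \<in> T" using n ex subspace_diff[OF assms, of "v - n" "v - z"] by simp
    then have "(z - n) \<bullet> (z - n) = 0" using n ex by (simp add: inner_diff_left)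
    then show ?thesis by simp
  qed
  with ex have "normal_part T v = z"
    unfolding normal_part_def by (intro the_equality) blast+
  with ex show "v - normal_part T v \<in> T" "\<And>t. t \<in> T \<Longrightarrow> normal_part T v \<bullet> t = 0" by auto
qed

lemma inner_outer_prod_orthonormal:
  assumes "orthonormal B" "orthonormal C" "(b, c) \<in> B \<times> C" "(b', c') \<in> B \<times> C"
  shows "outer_prod b c \<bullet> outer_prod b' c' = (if (b, c) = (b', c') then 1 else 0)"
proof -
  have "u \<bullet> u' = (if u = u' then 1 else 0)" if "orthonormal U" "u \<in> U" "u' \<in> U" for U u u'
    using that by (auto simp: orthonormal_def pairwise_def orthogonal_def dot_square_norm)
  from this[OF assms(1)] this[OF assms(2)] assms(3,4) show ?thesis
    by (simp add: inner_outer_prod_outer_prod)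
qed

lemma orthonormal_outer_prods:
  assumes B: "orthonormal B" and C: "orthonormal C" and I: "I \<subseteq> B \<times> C"
  shows "orthonormal ((\<lambda>(b, c). outer_prod b c) ` I)" "card ((\<lambda>(b, c). outer_prod b c) ` I) = card I"
proof -
  have ip: "outer_prod b c \<bullet> outer_prod b' c' = (if (b, c) = (b', c') then 1 else 0)"
    if "(b, c) \<in> I" "(b', c') \<in> I" for b c b' c'
    using inner_outer_prod_orthonormal[OF B C] that I by blast
  have "finite I" using B C I by (auto simp: orthonormal_def intro: finite_subset)
  moreover have "inj_on (\<lambda>(b, c). outer_prod b c) I"
  proof (rule inj_onI, clarify)
    fix b c b' c' assume "(b, c) \<in> I" "(b', c') \<in> I" "outer_prod b c = outer_prod b' c'"
    then show "b = b' \<and> c = c'" using ip[of b c b c] ip[of b c b' c'] by (auto split: if_splits)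
  qed
  moreover have "norm (outer_prod b c) = 1" if "(b, c) \<in> I" for b c
    using ip[OF that that] by (simp add: norm_eq_sqrt_inner)
  ultimately show "orthonormal ((\<lambda>(b, c). outer_prod b c) ` I)"
    using ip by (auto simp: orthonormal_def pairwise_def orthogonal_def)
  show "card ((\<lambda>(b, c). outer_prod b c) ` I) = card I"
    by (rule card_image) fact
qed

lemma matrix_expand_outer_prod:
  fixes M :: "real^'q^'p"
  assumes B: "orthonormal B" "span B = UNIV" and C: "orthonormal C" "span C = UNIV"
  shows "M = (\<Sum>b\<in>B. \<Sum>c\<in>C. (b \<bullet> (M *v c)) *\<^sub>R outer_prod b c)"
proof -
  have fin: "finite B" "finite C" using B C by (auto simp: orthonormal_def)
  have "M *v w = (\<Sum>b\<in>B. \<Sum>c\<in>C. (b \<bullet> (M *v c)) *\<^sub>R outer_prod b c) *v w" for w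
  proof -
    have "M *v w = M *v (\<Sum>c\<in>C. (c \<bullet> w) *\<^sub>R c)" using orthonormal_expand[OF C(1)] C(2) by simp
    also have "\<dots> = (\<Sum>c\<in>C. (c \<bullet> w) *\<^sub>R (\<Sum>b\<in>B. (b \<bullet> (M *v c)) *\<^sub>R b))"
      using orthonormal_expand[OF B(1)] B(2) by (simp add: vec.sum matrix_vector_mult_scaleR)
    also have "\<dots> = (\<Sum>b\<in>B. \<Sum>c\<in>C. ((b \<bullet> (M *v c)) * (c \<bullet> w)) *\<^sub>R b)"
      by (simp add: scaleR_sum_right mult.commute sum.swap[of _ C])
    also have "\<dots> = (\<Sum>b\<in>B. \<Sum>c\<in>C. (b \<bullet> (M *v c)) *\<^sub>R outer_prod b c) *v w"
      by (simp add: fin sum_matrix_vector_mult scaleR_matrix_vector_assoc[symmetric] outer_prod_mult_vec)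
    finally show ?thesis .
  qed
  then show ?thesis by (subst matrix_eq) blast
qed

lemma matrix_add_rdistrib: "(A + B) ** C = A ** C + B ** C"
  for A B :: "real^'m^'k" and C :: "real^'n^'m"
  by (simp add: vec_eq_iff matrix_matrix_mult_def sum.distrib distrib_right)

lemma linear_matrix_mult_right: "linear (\<lambda>H::real^'q^'p. H ** (P::real^'q^'q))"
  by (rule linearI) (simp_all add: matrix_add_rdistrib scalar_matrix_assoc)

lemma bounded_bilinear_matrix_sandwich:
  "bounded_bilinear (\<lambda>(H::real^'q^'p) (K::real^'q^'p). H ** (G::real^'p^'q) ** K ** (P::real^'q^'q))"
proof -
  have "linear (\<lambda>K. H ** G ** K ** P)" "linear (\<lambda>H. H ** G ** K ** P)" for H K :: "real^'q^'p"
    by (rule linearI; simp add: matrix_add_ldistrib matrix_add_rdistrib matrix_scalar_ac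
        scalar_matrix_assoc matrix_mul_assoc)+
  then show ?thesis unfolding bilinear_conv_bounded_bilinear[symmetric] bilinear_def by blast
qed

section \<open>Smoothness and second-order expansions\<close>

lemma Ck_on_const: "Ck_on k (\<lambda>x. c) W"
proof (induction k arbitrary: c)
  case 0 then show ?case by (simp add: continuous_on_const)
next
  case (Suc k)
  have "frechet_derivative (\<lambda>x. c) (at v) = (\<lambda>h. 0)" for v
    by (rule frechet_derivative_at[symmetric]) (rule has_derivative_const)
  then show ?case using Suc by simp
qed

lemma Ck_on_affine:
  fixes L :: "'a::euclidean_space \<Rightarrow> 'b::euclidean_space"
  assumes "linear L"
  shows "Ck_on k (\<lambda>x. c + L x) W"
proof -
  have d: "((\<lambda>x. c + L x) has_derivative (\<lambda>h. 0 + L h)) (at v)" for v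
    using assms by (intro has_derivative_add has_derivative_const bounded_linear_imp_has_derivative)
      (simp add: linear_conv_bounded_linear)
  then have "frechet_derivative (\<lambda>x. c + L x) (at v) = (\<lambda>h. 0 + L h)" for v
    by (rule frechet_derivative_at[symmetric])
  moreover have "(\<lambda>x. c + L x) differentiable_on W"
    using d by (meson differentiableI differentiable_at_imp_differentiable_on)
  ultimately show ?thesis
    by (cases k) (simp_all add: Ck_on_const differentiable_imp_continuous_on)
qed

lemma Ck_on_quadratic:
  fixes L :: "'a::euclidean_space \<Rightarrow> 'b::euclidean_space"
  assumes "linear L" and b: "bounded_bilinear b"
  shows "Ck_on k (\<lambda>x. c + L x + b x x) W"
proof -
  have d: "((\<lambda>x. c + L x + b x x) has_derivative (\<lambda>h. 0 + L h + (b v h + b h v))) (at v)" for v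
    using assms(1) by (intro has_derivative_add has_derivative_const
        bounded_bilinear.FDERIV[OF b has_derivative_ident has_derivative_ident]
        bounded_linear_imp_has_derivative) (simp add: linear_conv_bounded_linear)
  then have fd: "frechet_derivative (\<lambda>x. c + L x + b x x) (at v) = (\<lambda>h. 0 + L h + (b v h + b h v))" for v
    by (rule frechet_derivative_at[symmetric])
  have "linear (\<lambda>v. b v a + b a v)" for a
    using bounded_bilinear.bounded_linear_left[OF b] bounded_bilinear.bounded_linear_right[OF b]
    by (intro linear_compose_add) (auto simp: bounded_linear.linear)
  then have "Ck_on k' (\<lambda>v. (0 + L a) + (b v a + b a v)) W" for a k'
    by (rule Ck_on_affine)
  moreover have "(\<lambda>x. c + L x + b x x) differentiable_on W"
    using d by (meson differentiableI differentiable_at_imp_differentiable_on)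
  ultimately show ?thesis
    by (cases k) (simp_all add: fd differentiable_imp_continuous_on)
qed

lemma smooth_on_quadratic:
  fixes L :: "'a::euclidean_space \<Rightarrow> 'b::euclidean_space"
  assumes "linear L" and "bounded_bilinear b" and "open W"
  shows "smooth_on (\<lambda>x. c + L x + b x x) W"
  using assms Ck_on_quadratic by (auto simp: smooth_on_def)

lemma frechet_derivative_works_on_open:
  assumes "f differentiable_on W" "open W" "v \<in> W"
  shows "(f has_derivative frechet_derivative f (at v)) (at v)"
  using assms at_within_open[OF assms(3,2)]
  by (auto simp: differentiable_on_def frechet_derivative_works)

lemma taylor2_smallo:
  fixes g g' :: "real \<Rightarrow> 'a::real_normed_vector"
  assumes "d0 > 0" and g: "\<And>s. \<bar>s\<bar> < d0 \<Longrightarrow> (g has_vector_derivative g' s) (at s)"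
    and g': "(g' has_vector_derivative c) (at 0)"
  shows "(\<lambda>t. norm (g t - g 0 - t *\<^sub>R g' 0 - (t\<^sup>2/2) *\<^sub>R c)) \<in> o[at 0](\<lambda>t. t\<^sup>2)"
proof (rule landau_o.smallI)
  fix e :: real assume "e > 0"
  obtain d where "d > 0" and d: "\<And>s. norm s < d \<Longrightarrow> norm (g' s - g' 0 - s *\<^sub>R c) \<le> e * norm s"
    using g' \<open>e > 0\<close> unfolding has_vector_derivative_def has_derivative_at_alt by force
  define F where "F s = g s - (s\<^sup>2/2) *\<^sub>R c" for s
  have "norm (g t - g 0 - t *\<^sub>R g' 0 - (t\<^sup>2/2) *\<^sub>R c) \<le> e * t\<^sup>2"
    if t: "\<bar>t\<bar> < min d d0" for t
  proof -
    have F': "(F has_vector_derivative (g' s - s *\<^sub>R c)) (at s within cball 0 \<bar>t\<bar>)"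
      if "s \<in> cball 0 \<bar>t\<bar>" for s
      using that t unfolding F_def
      by (auto intro!: derivative_eq_intros g[THEN has_vector_derivative_at_within]
          simp: power2_eq_square)
    have "norm (g' s - s *\<^sub>R c - (g' 0 - 0 *\<^sub>R c)) \<le> e * \<bar>t\<bar>" if "s \<in> cball 0 \<bar>t\<bar>" for s
      using d[of s] that t \<open>e > 0\<close> by (auto simp: algebra_simps intro: order.trans mult_left_mono)
    then have "norm (F t - F 0 - (t - 0) *\<^sub>R (g' 0 - 0 *\<^sub>R c)) \<le> norm (t - 0) * (e * \<bar>t\<bar>)"
      by (intro vector_differentiable_bound_linearization[OF F']) (auto simp: closed_segment_eq_real_ivl)
    then show ?thesis by (simp add: F_def algebra_simps power2_eq_square abs_mult_self)
  qed
  moreover have "\<forall>\<^sub>F t in at 0. \<bar>t\<bar> < min d d0"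
    using eventually_at_ball[of "min d d0" 0 UNIV] \<open>d > 0\<close> \<open>d0 > 0\<close> by (auto elim: eventually_mono)
  ultimately show "\<forall>\<^sub>F t in at 0. norm (norm (g t - g 0 - t *\<^sub>R g' 0 - (t\<^sup>2/2) *\<^sub>R c)) \<le> e * norm (t\<^sup>2)"
    by (auto elim: eventually_mono)
qed

lemma has_vector_derivative_along_line:
  assumes "(f has_derivative f') (at (u + s *\<^sub>R a))"
  shows "((\<lambda>t. f (u + t *\<^sub>R a)) has_vector_derivative f' a) (at s)"
proof -
  have "((\<lambda>t. u + t *\<^sub>R a) has_derivative (\<lambda>t. t *\<^sub>R a)) (at s)"
    by (auto intro!: derivative_eq_intros)
  from diff_chain_at[OF this assms] show ?thesis
    using linear_scale[OF has_derivative_linear[OF assms]] by (simp add: has_vector_derivative_def o_def)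
qed

lemma taylor2_along_line:
  fixes \<phi> :: "'a::euclidean_space \<Rightarrow> 'b::euclidean_space"
  assumes "Ck_on 2 \<phi> W" and "open W" "u \<in> W"
  shows "(\<lambda>t. norm (\<phi> (u + t *\<^sub>R a) - \<phi> u - t *\<^sub>R frechet_derivative \<phi> (at u) a
             - (t\<^sup>2/2) *\<^sub>R second_deriv \<phi> u a a)) \<in> o[at 0](\<lambda>t. t\<^sup>2)"
proof -
  define h where "h v = frechet_derivative \<phi> (at v) a" for v
  have "\<phi> differentiable_on W" "h differentiable_on W"
    using assms(1) by (simp_all add: numeral_2_eq_2 h_def[abs_def])
  then have D\<phi>: "\<And>v. v \<in> W \<Longrightarrow> (\<phi> has_derivative frechet_derivative \<phi> (at v)) (at v)"
    and Dh: "(h has_derivative frechet_derivative h (at u)) (at u)"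
    using frechet_derivative_works_on_open assms(2,3) by blast+
  obtain d0 where "d0 > 0" and d0: "ball u d0 \<subseteq> W" using assms(2,3) open_contains_ball by blast
  define d where "d = d0 / (norm a + 1)"
  have line: "u + s *\<^sub>R a \<in> W" if "\<bar>s\<bar> < d" for s
  proof -
    have "\<bar>s\<bar> * norm a \<le> \<bar>s\<bar> * (norm a + 1)" by (simp add: mult_left_mono)
    also have "\<dots> < d0"
      using that pos_less_divide_eq[of "norm a + 1"] norm_ge_zero[of a] by (simp add: d_def)
    finally show ?thesis using d0 by (auto simp: dist_norm)
  qed
  have "(\<lambda>t. norm (\<phi> (u + t *\<^sub>R a) - \<phi> (u + 0 *\<^sub>R a) - t *\<^sub>R h (u + 0 *\<^sub>R a)
             - (t\<^sup>2/2) *\<^sub>R second_deriv \<phi> u a a)) \<in> o[at 0](\<lambda>t. t\<^sup>2)"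
  proof (rule taylor2_smallo)
    show "d > 0"
      using \<open>d0 > 0\<close> norm_ge_zero[of a] unfolding d_def by (intro divide_pos_pos) linarith+
    show "((\<lambda>t. \<phi> (u + t *\<^sub>R a)) has_vector_derivative h (u + s *\<^sub>R a)) (at s)" if "\<bar>s\<bar> < d" for s
      unfolding h_def by (rule has_vector_derivative_along_line[OF D\<phi>[OF line[OF that]]])
    show "((\<lambda>s. h (u + s *\<^sub>R a)) has_vector_derivative second_deriv \<phi> u a a) (at 0)"
      using has_vector_derivative_along_line[of h _ u 0 a] Dh
      by (simp add: second_deriv_def h_def[abs_def])
  qed
  then show ?thesis by (simp add: h_def)
qed

lemma linear_plus_quadratic_smallo_imp_zero:
  fixes \<alpha> \<beta> :: real
  assumes "(\<lambda>t. t * \<alpha> + t\<^sup>2 * \<beta>) \<in> o[at 0](\<lambda>t. t\<^sup>2)"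
  shows "\<alpha> = 0" "\<beta> = 0"
proof -
  have lim: "((\<lambda>t. (t * \<alpha> + t\<^sup>2 * \<beta>) / t\<^sup>2) \<longlongrightarrow> 0) (at 0)"
    using smalloD_tendsto[OF assms] .
  have "((\<lambda>t. t * ((t * \<alpha> + t\<^sup>2 * \<beta>) / t\<^sup>2)) \<longlongrightarrow> 0 * 0) (at 0)"
    by (intro tendsto_mult lim) (auto intro: tendsto_ident_at)
  moreover have "\<forall>\<^sub>F t in at (0::real). t * ((t * \<alpha> + t\<^sup>2 * \<beta>) / t\<^sup>2) = \<alpha> + t * \<beta>"
    by (auto simp: eventually_at_filter power2_eq_square field_simps)
  ultimately have "((\<lambda>t. \<alpha> + t * \<beta>) \<longlongrightarrow> 0 * 0) (at 0)"
    by (rule Lim_transform_eventually)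
  moreover have "((\<lambda>t. \<alpha> + t * \<beta>) \<longlongrightarrow> \<alpha> + 0 * \<beta>) (at 0)"
    by (intro tendsto_intros)
  ultimately show "\<alpha> = 0"
    using tendsto_unique[OF at_neq_bot] by fastforce
  then have "\<forall>\<^sub>F t in at (0::real). (t * \<alpha> + t\<^sup>2 * \<beta>) / t\<^sup>2 = \<beta>"
    by (auto simp: eventually_at_filter)
  with lim have "((\<lambda>t. \<beta>) \<longlongrightarrow> 0) (at (0::real))"
    by (rule Lim_transform_eventually)
  then show "\<beta> = 0"
    using tendsto_unique[OF at_neq_bot _ tendsto_const] by blast
qed

lemma continuous_on_pointwise_lipschitz:
  assumes "\<And>y y0. y \<in> S \<Longrightarrow> y0 \<in> S \<Longrightarrow> dist (f y) (f y0) \<le> C y0 * dist y y0"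
  shows "continuous_on S f"
  unfolding continuous_on_iff
proof (intro ballI allI impI)
  fix y0 and e :: real assume y0: "y0 \<in> S" and "e > 0"
  define d where "d = e / (\<bar>C y0\<bar> + 1)"
  have "d > 0" using \<open>e > 0\<close> by (simp add: d_def add_pos_nonneg)
  moreover have "dist (f y) (f y0) < e" if "y \<in> S" "dist y y0 < d" for y
  proof -
    have "dist (f y) (f y0) \<le> \<bar>C y0\<bar> * dist y y0"
      using assms[OF that(1) y0] by (metis abs_ge_self mult_right_mono order_trans zero_le_dist)
    also have "\<dots> \<le> \<bar>C y0\<bar> * d" using that(2) by (simp add: mult_left_mono)
    also have "\<dots> < e" using \<open>e > 0\<close> by (simp add: d_def field_simps add_pos_nonneg)
    finally show ?thesis .
  qed
  ultimately show "\<exists>d>0. \<forall>y\<in>S. dist y y0 < d \<longrightarrow> dist (f y) (f y0) < e" by blast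
qed

lemma second_order_jet_bounds:
  fixes \<gamma> :: "real \<Rightarrow> 'a::real_normed_vector"
  assumes "(\<lambda>t. norm (\<gamma> t - x - t *\<^sub>R y1 - (t\<^sup>2/2) *\<^sub>R y2)) \<in> o[at 0](\<lambda>t. t\<^sup>2)"
  obtains c where "c \<ge> 0" "\<forall>\<^sub>F t in at 0. norm (\<gamma> t - x - t *\<^sub>R y1) \<le> c * t\<^sup>2"
    "\<forall>\<^sub>F t in at 0. norm (\<gamma> t - x) \<le> c * \<bar>t\<bar>"
proof
  define c where "c = 1 + norm y1 + norm y2"
  show "c \<ge> 0" by (simp add: c_def add_nonneg_nonneg)
  have bounds: "norm (\<gamma> t - x - t *\<^sub>R y1) \<le> c * t\<^sup>2 \<and> norm (\<gamma> t - x) \<le> c * \<bar>t\<bar>"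
    if R: "norm (\<gamma> t - x - t *\<^sub>R y1 - (t\<^sup>2/2) *\<^sub>R y2) \<le> t\<^sup>2" and "\<bar>t\<bar> < 1" for t
  proof -
    have "norm (\<gamma> t - x - t *\<^sub>R y1) \<le> norm (\<gamma> t - x - t *\<^sub>R y1 - (t\<^sup>2/2) *\<^sub>R y2) + norm ((t\<^sup>2/2) *\<^sub>R y2)"
      using norm_triangle_ineq[of "\<gamma> t - x - t *\<^sub>R y1 - (t\<^sup>2/2) *\<^sub>R y2" "(t\<^sup>2/2) *\<^sub>R y2"] by simp
    moreover have "norm ((t\<^sup>2/2) *\<^sub>R y2) \<le> norm y2 * t\<^sup>2" by simp
    ultimately have quad: "norm (\<gamma> t - x - t *\<^sub>R y1) \<le> t\<^sup>2 + norm y2 * t\<^sup>2" using R by linarith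
    have "t\<^sup>2 \<le> \<bar>t\<bar>"
      using \<open>\<bar>t\<bar> < 1\<close> mult_left_le[of "\<bar>t\<bar>" "\<bar>t\<bar>"] by (simp add: power2_eq_square)
    then have "norm y2 * t\<^sup>2 \<le> norm y2 * \<bar>t\<bar>" by (simp add: mult_left_mono)
    moreover have "norm (\<gamma> t - x) \<le> norm y1 * \<bar>t\<bar> + norm (\<gamma> t - x - t *\<^sub>R y1)"
      using norm_triangle_ineq[of "t *\<^sub>R y1" "\<gamma> t - x - t *\<^sub>R y1"] by (simp add: mult.commute)
    moreover have "c * t\<^sup>2 = t\<^sup>2 + norm y1 * t\<^sup>2 + norm y2 * t\<^sup>2" "c * \<bar>t\<bar> = \<bar>t\<bar> + norm y1 * \<bar>t\<bar> + norm y2 * \<bar>t\<bar>"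
      by (simp_all add: c_def algebra_simps)
    moreover have "0 \<le> norm y1 * t\<^sup>2" by simp
    ultimately show ?thesis using quad \<open>t\<^sup>2 \<le> \<bar>t\<bar>\<close> by linarith
  qed
  have "\<forall>\<^sub>F t in at (0::real). \<bar>t\<bar> < 1"
    by (auto simp: eventually_at intro!: exI[of _ 1])
  moreover have "\<forall>\<^sub>F t in at 0. norm (\<gamma> t - x - t *\<^sub>R y1 - (t\<^sup>2/2) *\<^sub>R y2) \<le> t\<^sup>2"
    using landau_o.smallD[OF assms zero_less_one] by simp
  ultimately have "\<forall>\<^sub>F t in at 0. norm (\<gamma> t - x - t *\<^sub>R y1) \<le> c * t\<^sup>2 \<and> norm (\<gamma> t - x) \<le> c * \<bar>t\<bar>"
    by eventually_elim (use bounds in blast)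
  then show "\<forall>\<^sub>F t in at 0. norm (\<gamma> t - x - t *\<^sub>R y1) \<le> c * t\<^sup>2"
    "\<forall>\<^sub>F t in at 0. norm (\<gamma> t - x) \<le> c * \<bar>t\<bar>"
    by (auto elim: eventually_mono)
qed

section \<open>Kernel, image and tangent space of a matrix\<close>

definition mat_image :: "real^'q^'p \<Rightarrow> (real^'p) set" where
  "mat_image X = range ((*v) X)"

definition mat_kernel :: "real^'q^'p \<Rightarrow> (real^'q) set" where
  "mat_kernel X = {w. X *v w = 0}"

definition tangent_space :: "real^'q^'p \<Rightarrow> (real^'q^'p) set" where
  "tangent_space X = {H. \<forall>x\<in>(mat_image X)\<^sup>\<bottom>. \<forall>w\<in>mat_kernel X. x \<bullet> (H *v w) = 0}"

lemma tangent_spaceI: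
  "(\<And>x w. x \<in> (mat_image X)\<^sup>\<bottom> \<Longrightarrow> w \<in> mat_kernel X \<Longrightarrow> x \<bullet> (H *v w) = 0) \<Longrightarrow> H \<in> tangent_space X"
  by (simp add: tangent_space_def)

lemma subspace_mat_kernel: "subspace (mat_kernel X)"
  unfolding subspace_def mat_kernel_def by (simp add: matrix_vector_right_distrib matrix_vector_mult_scaleR)

lemma subspace_mat_image: "subspace (mat_image X)"
  unfolding mat_image_def by (rule linear_subspace_image[OF matrix_vector_mul_linear subspace_UNIV])

lemma subspace_tangent_space: "subspace (tangent_space X)"
  unfolding subspace_def tangent_space_def
  by (simp add: matrix_vector_mult_add_rdistrib inner_add_right scaleR_matrix_vector_assoc[symmetric])

lemma tangent_space_mult_kernel:
  assumes "H \<in> tangent_space X" "w \<in> mat_kernel X"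
  shows "H *v w \<in> mat_image X"
proof -
  have "H *v w \<in> (mat_image X)\<^sup>\<bottom>\<^sup>\<bottom>"
    using assms unfolding tangent_space_def orthogonal_comp_def orthogonal_def by auto
  then show ?thesis using orthogonal_comp_self[OF subspace_mat_image[of X]] by simp
qed

lemma mat_image_perp_orthogonal: "x \<in> (mat_image X)\<^sup>\<bottom> \<Longrightarrow> x \<bullet> (X *v v) = 0"
  by (auto simp: orthogonal_comp_def orthogonal_def mat_image_def inner_commute)

lemma span_kernel_perp: "span ((mat_kernel X)\<^sup>\<bottom>) = (mat_kernel X)\<^sup>\<bottom>"
  by (simp add: span_eq_iff subspace_orthogonal_comp)

lemma kernel_perp_kernel_zero: "v \<in> (mat_kernel X)\<^sup>\<bottom> \<Longrightarrow> v \<in> mat_kernel X \<Longrightarrow> v = 0"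
  using orthogonal_Int_0[OF subspace_mat_kernel, of X] by blast

lemma inj_on_kernel_perp: "inj_on ((*v) X) ((mat_kernel X)\<^sup>\<bottom>)"
proof (rule inj_onI)
  fix a b assume "a \<in> (mat_kernel X)\<^sup>\<bottom>" "b \<in> (mat_kernel X)\<^sup>\<bottom>" "X *v a = X *v b"
  then have "a - b \<in> (mat_kernel X)\<^sup>\<bottom>" "a - b \<in> mat_kernel X"
    by (auto simp: subspace_diff[OF subspace_orthogonal_comp] mat_kernel_def matrix_vector_right_distrib[symmetric]
        algebra_simps)
  then show "a = b" using kernel_perp_kernel_zero by fastforce
qed

lemma image_kernel_perp: "(*v) X ` ((mat_kernel X)\<^sup>\<bottom>) = mat_image X"
proof
  show "mat_image X \<subseteq> (*v) X ` ((mat_kernel X)\<^sup>\<bottom>)"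
  proof
    fix y assume "y \<in> mat_image X"
    then obtain z where z: "y = X *v z" by (auto simp: mat_image_def)
    obtain a b where a: "a \<in> span (mat_kernel X)"
      and b: "\<And>w. w \<in> span (mat_kernel X) \<Longrightarrow> orthogonal b w" and "z = a + b"
      using orthogonal_subspace_decomp_exists[of "mat_kernel X" z] by blast
    have "span (mat_kernel X) = mat_kernel X" using subspace_mat_kernel by simp
    with a b have "a \<in> mat_kernel X" "b \<in> (mat_kernel X)\<^sup>\<bottom>"
      by (auto simp: orthogonal_comp_def orthogonal_commute span_base)
    with z \<open>z = a + b\<close> have "y = X *v b" "b \<in> (mat_kernel X)\<^sup>\<bottom>"
      by (simp_all add: matrix_vector_right_distrib mat_kernel_def)
    then show "y \<in> (*v) X ` ((mat_kernel X)\<^sup>\<bottom>)" by blast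
  qed
qed (auto simp: mat_image_def)

lemma dim_kernel_perp_eq_rank: "dim ((mat_kernel X)\<^sup>\<bottom>) = rank X"
proof -
  have "inj_on ((*v) X) (span ((mat_kernel X)\<^sup>\<bottom>))"
    unfolding span_kernel_perp by (rule inj_on_kernel_perp)
  from dim_image_eq[OF matrix_vector_mul_linear this] have "dim (mat_image X) = dim ((mat_kernel X)\<^sup>\<bottom>)"
    unfolding image_kernel_perp .
  then show ?thesis by (simp add: rank_dim_range mat_image_def)
qed

locale adapted_frame =
  fixes X :: "real^'q^'p" and r :: nat
    and B1 B2 :: "(real^'p) set" and C1 C2 :: "(real^'q) set" and G :: "real^'p^'q"
  assumes rank: "rank X = r"
    and B1: "orthonormal B1" "span B1 = mat_image X" "card B1 = r"
    and B2: "orthonormal B2" "span B2 = (mat_image X)\<^sup>\<bottom>" "card B2 = CARD('p) - r"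
    and C1: "orthonormal C1" "span C1 = (mat_kernel X)\<^sup>\<bottom>" "card C1 = r"
    and C2: "orthonormal C2" "span C2 = mat_kernel X" "card C2 = CARD('q) - r"
    and G: "\<And>y. G *v y \<in> (mat_kernel X)\<^sup>\<bottom>" "\<And>v. v \<in> (mat_kernel X)\<^sup>\<bottom> \<Longrightarrow> G *v (X *v v) = v"
begin

definition P_ker :: "real^'q^'q" where
  "P_ker = (\<Sum>c\<in>C2. outer_prod c c)"

lemma P_ker_mult: "P_ker *v w = (\<Sum>c\<in>C2. (c \<bullet> w) *\<^sub>R c)"
  using C2(1) by (simp add: P_ker_def orthonormal_def sum_matrix_vector_mult outer_prod_mult_vec)

lemma P_ker_in_kernel: "P_ker *v w \<in> mat_kernel X"
  unfolding P_ker_mult C2(2)[symmetric] by (intro span_sum span_mul span_base)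

lemma P_ker_kernel: "w \<in> mat_kernel X \<Longrightarrow> P_ker *v w = w"
  unfolding P_ker_mult using orthonormal_expand[OF C2(1), of w] C2(2) by simp

lemma P_ker_perp: "w \<in> (mat_kernel X)\<^sup>\<bottom> \<Longrightarrow> P_ker *v w = 0"
  using C2(2) span_superset[of C2] unfolding P_ker_mult
  by (auto simp: orthogonal_comp_def orthogonal_def inner_commute intro!: sum.neutral)

lemma diff_P_ker_perp: "w - P_ker *v w \<in> (mat_kernel X)\<^sup>\<bottom>"
proof -
  have "c \<bullet> (P_ker *v w) = c \<bullet> w" if "c \<in> C2" for c
    unfolding P_ker_mult by (rule orthonormal_inner_sum[OF C2(1) that])
  then have "orthogonal (w - P_ker *v w) c" if "c \<in> C2" for c
    using that by (simp add: orthogonal_def inner_commute[of _ c] inner_diff_right)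
  then have "orthogonal (w - P_ker *v w) k" if "k \<in> mat_kernel X" for k
    using orthogonal_to_span[of k C2 "w - P_ker *v w"] that C2(2) by simp
  then show ?thesis by (auto simp: orthogonal_comp_def orthogonal_commute)
qed

lemma P_ker_idem: "P_ker *v (P_ker *v w) = P_ker *v w"
  using P_ker_kernel P_ker_in_kernel by blast

lemma P_ker_diff: "P_ker *v (w - P_ker *v w) = 0"
  by (simp add: matrix_vector_right_distrib[symmetric] algebra_simps P_ker_idem)

lemma X_P_ker: "X *v (P_ker *v w) = 0"
  using P_ker_in_kernel by (simp add: mat_kernel_def)

lemma X_diff_P_ker: "X *v (w - P_ker *v w) = X *v w"
  using X_P_ker by (simp add: matrix_vector_right_distrib[symmetric] algebra_simps)

lemma P_ker_G: "P_ker *v (G *v y) = 0"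
  using P_ker_perp G(1) by blast

lemma G_X: "G *v (X *v z) = z - P_ker *v z"
  using G(2)[OF diff_P_ker_perp, of z] X_diff_P_ker by simp

lemma X_G: "y \<in> mat_image X \<Longrightarrow> X *v (G *v y) = y"
  by (auto simp: mat_image_def G_X X_diff_P_ker)

lemma dim_kernel_perp: "dim ((mat_kernel X)\<^sup>\<bottom>) = r"
  using dim_span_orthonormal[OF C1(1)] C1(2,3) by simp

definition \<mu> :: real where
  "\<mu> = (SOME m. m > 0 \<and> (\<forall>v\<in>(mat_kernel X)\<^sup>\<bottom>. m * norm v \<le> norm (X *v v)))"

lemma \<mu>: "\<mu> > 0" "\<And>v. v \<in> (mat_kernel X)\<^sup>\<bottom> \<Longrightarrow> \<mu> * norm v \<le> norm (X *v v)"
proof -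
  have "\<exists>m>0. \<forall>v\<in>(mat_kernel X)\<^sup>\<bottom>. m * norm v \<le> norm (X *v v)"
    using kernel_perp_kernel_zero
    by (intro injective_imp_isometric closed_subspace subspace_orthogonal_comp)
      (auto simp: mat_kernel_def)
  from someI_ex[OF this] show "\<mu> > 0" "\<And>v. v \<in> (mat_kernel X)\<^sup>\<bottom> \<Longrightarrow> \<mu> * norm v \<le> norm (X *v v)"
    unfolding \<mu>_def[symmetric] by auto
qed

lemma lower_bound_near:
  assumes "norm (Y - X) < \<mu>/2" and v: "v \<in> (mat_kernel X)\<^sup>\<bottom>"
  shows "(\<mu>/2) * norm v \<le> norm (Y *v v)"
proof -
  have "X *v v = Y *v v - (Y - X) *v v" by (simp add: matrix_vector_mult_diff_rdistrib)
  then have "norm (X *v v) \<le> norm (Y *v v) + norm ((Y - X) *v v)"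
    by (metis norm_triangle_ineq4)
  moreover have "norm ((Y - X) *v v) \<le> (\<mu>/2) * norm v"
    using norm_matrix_vector_mult_le[of "Y - X" v] mult_right_mono[OF less_imp_le[OF assms(1)], of "norm v"]
    by simp
  ultimately show ?thesis using \<mu>(2)[OF v] by linarith
qed

lemma norm_le_near:
  assumes "norm (Y - X) < \<mu>/2" and "v \<in> (mat_kernel X)\<^sup>\<bottom>"
  shows "norm v \<le> (2/\<mu>) * norm (Y *v v)"
  using lower_bound_near[OF assms] \<mu>(1) by (simp add: field_simps)

lemma inj_on_kernel_perp_near:
  assumes "norm (Y - X) < \<mu>/2"
  shows "inj_on ((*v) Y) ((mat_kernel X)\<^sup>\<bottom>)"
proof (rule inj_onI)
  fix a b assume a: "a \<in> (mat_kernel X)\<^sup>\<bottom>" and b: "b \<in> (mat_kernel X)\<^sup>\<bottom>" and "Y *v a = Y *v b"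
  then have "Y *v (a - b) = 0" by (simp add: matrix_vector_right_distrib[symmetric] algebra_simps)
  then have "(\<mu>/2) * norm (a - b) \<le> 0"
    using lower_bound_near[OF assms subspace_diff[OF subspace_orthogonal_comp[of "mat_kernel X"] a b]] by simp
  then show "a = b" using \<mu>(1) by (simp add: mult_le_0_iff)
qed

lemma dim_image_kernel_perp_near:
  assumes "norm (Y - X) < \<mu>/2"
  shows "dim ((*v) Y ` ((mat_kernel X)\<^sup>\<bottom>)) = r"
proof -
  have "inj_on ((*v) Y) (span ((mat_kernel X)\<^sup>\<bottom>))"
    unfolding span_kernel_perp by (rule inj_on_kernel_perp_near[OF assms])
  from dim_image_eq[OF matrix_vector_mul_linear this] show ?thesis using dim_kernel_perp by simp
qed

lemma image_kernel_perp_near: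
  assumes "norm (Y - X) < \<mu>/2" and "rank Y = r"
  shows "\<exists>\<xi>\<in>(mat_kernel X)\<^sup>\<bottom>. Y *v \<xi> = Y *v z"
proof -
  have "(\<lambda>v. Y *v v) ` ((mat_kernel X)\<^sup>\<bottom>) = range (\<lambda>v. Y *v v)"
  proof (rule subspace_dim_equal)
    show "subspace ((\<lambda>v. Y *v v) ` ((mat_kernel X)\<^sup>\<bottom>))"
      by (simp add: linear_subspace_image subspace_orthogonal_comp)
    show "subspace (range (\<lambda>v. Y *v v))"
      by (simp add: linear_subspace_image)
    show "dim (range ((*v) Y)) \<le> dim ((*v) Y ` ((mat_kernel X)\<^sup>\<bottom>))"
      using dim_image_kernel_perp_near[OF assms(1)] assms(2) rank_dim_range[of Y] by simp
  qed auto
  then have "Y *v z \<in> (\<lambda>v. Y *v v) ` ((mat_kernel X)\<^sup>\<bottom>)" by simp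
  then show ?thesis by (metis imageE)
qed

definition "basis_p = B1 \<union> B2"
definition "basis_q = C1 \<union> C2"

lemma basis_p: "orthonormal basis_p" "span basis_p = UNIV" "B1 \<inter> B2 = {}"
  unfolding basis_p_def by (rule orthonormal_Un_orthogonal_comp[OF B1(1) B2(1) B1(2) B2(2) subspace_mat_image])+

lemma basis_q: "orthonormal basis_q" "span basis_q = UNIV" "C1 \<inter> C2 = {}"
proof -
  have "span C2 = (mat_kernel X)\<^sup>\<bottom>\<^sup>\<bottom>"
    using C2(2) orthogonal_comp_self[OF subspace_mat_kernel[of X]] by simp
  then show "orthonormal basis_q" "span basis_q = UNIV" "C1 \<inter> C2 = {}"
    unfolding basis_q_def
    by (rule orthonormal_Un_orthogonal_comp[OF C1(1) C2(1) C1(2) _ subspace_orthogonal_comp])+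
qed

lemma r_le_card: "r \<le> CARD('q)"
  using rank_bound[of X] rank by simp

lemma card_basis_q: "card basis_q = CARD('q)"
  using basis_q C1 C2 r_le_card unfolding basis_q_def
  by (simp add: card_Un_disjoint orthonormal_def)

definition "tangent_index = B1 \<times> basis_q \<union> B2 \<times> C1"

lemma tangent_index_subset: "tangent_index \<subseteq> basis_p \<times> basis_q"
  unfolding tangent_index_def basis_p_def basis_q_def by auto

lemma outer_prod_in_tangent_space:
  assumes "b \<in> mat_image X \<or> c \<in> (mat_kernel X)\<^sup>\<bottom>"
  shows "outer_prod b c \<in> tangent_space X"
proof -
  have "x \<bullet> b = 0 \<or> c \<bullet> w = 0" if "x \<in> (mat_image X)\<^sup>\<bottom>" "w \<in> mat_kernel X" for x w
    using assms that by (auto simp: orthogonal_comp_def orthogonal_def inner_commute)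
  then show ?thesis by (auto simp: tangent_space_def outer_prod_mult_vec)
qed

lemma tangent_space_eq_span:
  "tangent_space X = span ((\<lambda>(b, c). outer_prod b c) ` tangent_index)"
proof
  have "B1 \<subseteq> mat_image X" "C1 \<subseteq> (mat_kernel X)\<^sup>\<bottom>"
    using B1(2) C1(2) span_superset by blast+
  then show "span ((\<lambda>(b, c). outer_prod b c) ` tangent_index) \<subseteq> tangent_space X"
    unfolding tangent_index_def
    by (intro span_minimal subspace_tangent_space) (auto intro: outer_prod_in_tangent_space)
next
  show "tangent_space X \<subseteq> span ((\<lambda>(b, c). outer_prod b c) ` tangent_index)"
  proof
    fix H assume H: "H \<in> tangent_space X"
    let ?f = "\<lambda>(b, c). (b \<bullet> (H *v c)) *\<^sub>R outer_prod b c"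
    have fin: "finite (basis_p \<times> basis_q)" using basis_p basis_q by (simp add: orthonormal_def)
    have zero: "?f p = 0" if "p \<in> basis_p \<times> basis_q - tangent_index" for p
    proof -
      obtain b c where "p = (b, c)" by (cases p)
      with that have bc: "p = (b, c)" "b \<in> B2" "c \<in> C2"
        unfolding tangent_index_def basis_p_def basis_q_def by auto
      have "b \<in> (mat_image X)\<^sup>\<bottom>" "c \<in> mat_kernel X"
        using bc B2(2) C2(2) span_superset by blast+
      then show ?thesis using H bc by (simp add: tangent_space_def)
    qed
    have "H = (\<Sum>p\<in>basis_p \<times> basis_q. ?f p)"
      using matrix_expand_outer_prod[OF basis_p(1,2) basis_q(1,2), of H]
      by (simp add: sum.cartesian_product)
    also have "\<dots> = (\<Sum>p\<in>tangent_index. ?f p)"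
      using fin tangent_index_subset zero by (intro sum.mono_neutral_right) auto
    also have "\<dots> \<in> span ((\<lambda>(b, c). outer_prod b c) ` tangent_index)"
      by (intro span_sum) (auto intro: span_mul span_base)
    finally show "H \<in> span ((\<lambda>(b, c). outer_prod b c) ` tangent_index)" .
  qed
qed

lemma dim_tangent_space: "dim (tangent_space X) = r * CARD('q) + (CARD('p) - r) * r"
proof -
  note O = orthonormal_outer_prods[OF basis_p(1) basis_q(1) tangent_index_subset]
  have "dim (tangent_space X) = card tangent_index"
    unfolding tangent_space_eq_span dim_span_orthonormal[OF O(1)] O(2) ..
  also have "\<dots> = card (B1 \<times> basis_q) + card (B2 \<times> C1)"
    unfolding tangent_index_def using basis_p basis_q B1 B2 C1
    by (intro card_Un_disjoint) (auto simp: orthonormal_def)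
  also have "\<dots> = r * CARD('q) + (CARD('p) - r) * r"
    using card_basis_q B1(3) B2(3) C1(3) by (simp add: card_cartesian_product)
  finally show ?thesis .
qed

end

section \<open>A chart of the rank stratum\<close>

context adapted_frame
begin

definition P_perp :: "real^'q^'q" where
  "P_perp = mat 1 - P_ker"

lemma P_perp_mult: "P_perp *v w = w - P_ker *v w"
  by (simp add: P_perp_def matrix_vector_mult_diff_rdistrib)

text \<open>\<open>chart H\<close> agrees with \<open>H\<close> on \<open>(ker X)\<^sup>\<bottom>\<close> and replaces \<open>H\<close> on \<open>ker X\<close> by the quadratic
  term \<open>H G H\<close>; both take values in \<open>H ((ker X)\<^sup>\<bottom>)\<close>, which keeps the rank equal to \<open>r\<close>.\<close>

definition chart :: "real^'q^'p \<Rightarrow> real^'q^'p" where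
  "chart H = H ** P_perp + H ** G ** H ** P_ker"

definition chart_deriv :: "real^'q^'p \<Rightarrow> real^'q^'p \<Rightarrow> real^'q^'p" where
  "chart_deriv H K = K ** P_perp + H ** G ** K ** P_ker + K ** G ** H ** P_ker"

lemma smooth_on_chart: "open W \<Longrightarrow> smooth_on chart W"
  using smooth_on_quadratic[OF linear_matrix_mult_right bounded_bilinear_matrix_sandwich, where c = 0]
  by (simp add: chart_def[abs_def])

lemma has_derivative_chart: "(chart has_derivative chart_deriv H) (at H)"
proof -
  have "((\<lambda>H. 0 + H ** P_perp + H ** G ** H ** P_ker) has_derivative
      (\<lambda>K. 0 + K ** P_perp + (H ** G ** K ** P_ker + K ** G ** H ** P_ker))) (at H)"
    using linear_matrix_mult_right[of P_perp]
    by (intro has_derivative_add has_derivative_const bounded_linear_imp_has_derivative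
        bounded_bilinear.FDERIV[OF bounded_bilinear_matrix_sandwich has_derivative_ident has_derivative_ident])
      (simp add: linear_conv_bounded_linear)
  then show ?thesis by (simp add: chart_def[abs_def] chart_deriv_def[abs_def] add.assoc)
qed

lemma frechet_derivative_chart: "frechet_derivative chart (at H) = chart_deriv H"
  by (rule frechet_derivative_at[OF has_derivative_chart, symmetric])

lemma continuous_on_chart: "continuous_on S chart"
  by (meson differentiableI differentiable_at_imp_differentiable_on
      differentiable_imp_continuous_on has_derivative_chart)

lemma chart_mult: "chart H *v w = H *v (w - P_ker *v w) + H *v (G *v (H *v (P_ker *v w)))"
  by (simp add: chart_def matrix_vector_mult_add_rdistrib matrix_vector_mul_assoc[symmetric] P_perp_mult)

lemma chart_deriv_mult:
  "chart_deriv H K *v w = K *v (w - P_ker *v w)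
     + (H *v (G *v (K *v (P_ker *v w))) + K *v (G *v (H *v (P_ker *v w))))"
  by (simp add: chart_deriv_def matrix_vector_mult_add_rdistrib matrix_vector_mul_assoc[symmetric] P_perp_mult)

lemma rank_chart:
  assumes "norm (H - X) < \<mu>/2"
  shows "rank (chart H) = r"
proof -
  have "range ((*v) (chart H)) = (*v) H ` ((mat_kernel X)\<^sup>\<bottom>)"
  proof (intro equalityI subsetI)
    fix y assume "y \<in> range ((*v) (chart H))"
    then obtain w where "y = H *v ((w - P_ker *v w) + G *v (H *v (P_ker *v w)))"
      by (auto simp: chart_mult matrix_vector_right_distrib)
    moreover have "(w - P_ker *v w) + G *v (H *v (P_ker *v w)) \<in> (mat_kernel X)\<^sup>\<bottom>"
      using subspace_add[OF subspace_orthogonal_comp[of "mat_kernel X"] diff_P_ker_perp G(1)] .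
    ultimately show "y \<in> (*v) H ` ((mat_kernel X)\<^sup>\<bottom>)" by blast
  next
    fix y assume "y \<in> (*v) H ` ((mat_kernel X)\<^sup>\<bottom>)"
    then obtain v where "v \<in> (mat_kernel X)\<^sup>\<bottom>" "y = H *v v" by blast
    then have "y = chart H *v v" by (simp add: chart_mult P_ker_perp)
    then show "y \<in> range ((*v) (chart H))" by simp
  qed
  then show ?thesis using dim_image_kernel_perp_near[OF assms] by (simp add: rank_dim_range)
qed

lemma chart_deriv_inj:
  assumes "norm (H - X) < \<mu>/2"
  shows "inj_on (chart_deriv H) (tangent_space X)"
proof -
  have zero: "K = 0" if K: "K \<in> tangent_space X" and D0: "chart_deriv H K = 0" for K
  proof -
    have perp: "K *v (w - P_ker *v w) = 0" for w
      using arg_cong[OF D0, of "\<lambda>M. M *v (w - P_ker *v w)"] by (simp add: chart_deriv_mult P_ker_diff P_ker_idem)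
    then have "K *v (G *v y) = 0" for y
      using perp[of "G *v y"] by (simp add: P_ker_G)
    then have "H *v (G *v (K *v (P_ker *v w))) = 0" for w
      using arg_cong[OF D0, of "\<lambda>M. M *v w"] by (simp add: chart_deriv_mult perp)
    then have "G *v (K *v (P_ker *v w)) = 0" for w
      using lower_bound_near[OF assms G(1)[of "K *v (P_ker *v w)"]] \<mu>(1)
      by (simp add: mult_le_0_iff)
    then have "K *v (P_ker *v w) = 0" for w
      using X_G[OF tangent_space_mult_kernel[OF K P_ker_in_kernel[of w]]] by simp
    with perp have "K *v w = 0" for w
      by (metis diff_add_cancel matrix_vector_right_distrib add_0)
    then show "K = 0" by (simp add: matrix_eq)
  qed
  show ?thesis
  proof (rule inj_onI)
    fix K1 K2 assume K: "K1 \<in> tangent_space X" "K2 \<in> tangent_space X"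
      and "chart_deriv H K1 = chart_deriv H K2"
    then have "chart_deriv H (K1 - K2) = 0"
      using linear_diff[OF has_derivative_linear[OF has_derivative_chart]] by simp
    then have "K1 - K2 = 0" by (rule zero[OF subspace_diff[OF subspace_tangent_space K]])
    then show "K1 = K2" by simp
  qed
qed

definition near_stratum :: "real^'q^'p \<Rightarrow> bool" where
  "near_stratum Y \<longleftrightarrow> norm (Y - X) < \<mu>/2 \<and> rank Y = r"

definition perp_preimage :: "real^'q^'p \<Rightarrow> real^'q \<Rightarrow> real^'q" where
  "perp_preimage Y w = (THE \<xi>. \<xi> \<in> (mat_kernel X)\<^sup>\<bottom> \<and> Y *v \<xi> = Y *v (P_ker *v w))"

lemma perp_preimage_eq:
  assumes "norm (Y - X) < \<mu>/2" and \<xi>: "\<xi> \<in> (mat_kernel X)\<^sup>\<bottom>" "Y *v \<xi> = Y *v (P_ker *v w)"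
  shows "perp_preimage Y w = \<xi>"
  unfolding perp_preimage_def
proof (rule the_equality)
  fix \<xi>' assume \<xi>': "\<xi>' \<in> (mat_kernel X)\<^sup>\<bottom> \<and> Y *v \<xi>' = Y *v (P_ker *v w)"
  show "\<xi>' = \<xi>"
    by (rule inj_onD[OF inj_on_kernel_perp_near[OF assms(1)]]) (use \<xi> \<xi>' in simp_all)
qed (use \<xi> in simp)

lemma perp_preimage:
  assumes "near_stratum Y"
  shows "perp_preimage Y w \<in> (mat_kernel X)\<^sup>\<bottom>" "Y *v perp_preimage Y w = Y *v (P_ker *v w)"
proof -
  have Y: "norm (Y - X) < \<mu>/2" "rank Y = r" using assms by (auto simp: near_stratum_def)
  obtain \<xi> where "\<xi> \<in> (mat_kernel X)\<^sup>\<bottom>" "Y *v \<xi> = Y *v (P_ker *v w)"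
    using image_kernel_perp_near[OF Y] by blast
  with perp_preimage_eq[OF Y(1) this] show "perp_preimage Y w \<in> (mat_kernel X)\<^sup>\<bottom>"
    "Y *v perp_preimage Y w = Y *v (P_ker *v w)" by simp_all
qed

lemma linear_perp_preimage:
  assumes Y: "near_stratum Y"
  shows "linear (perp_preimage Y)"
proof -
  have n: "norm (Y - X) < \<mu>/2" using Y by (simp add: near_stratum_def)
  note p = perp_preimage[OF Y]
  show ?thesis
  proof (rule linearI)
    show "perp_preimage Y (a + b) = perp_preimage Y a + perp_preimage Y b" for a b
      using p subspace_add[OF subspace_orthogonal_comp[of "mat_kernel X"]]
      by (intro perp_preimage_eq[OF n]) (simp_all add: matrix_vector_right_distrib)
    show "perp_preimage Y (c *\<^sub>R a) = c *\<^sub>R perp_preimage Y a" for c a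
      using p subspace_scale[OF subspace_orthogonal_comp[of "mat_kernel X"]]
      by (intro perp_preimage_eq[OF n]) (simp_all add: matrix_vector_mult_scaleR)
  qed
qed

lemma norm_perp_preimage_le:
  assumes "near_stratum Y"
  shows "norm (perp_preimage Y w) \<le> (2/\<mu>) * norm (Y *v (P_ker *v w))"
  using norm_le_near[of Y "perp_preimage Y w"] assms perp_preimage[OF assms]
  by (simp add: near_stratum_def)

definition chart_inv :: "real^'q^'p \<Rightarrow> real^'q^'p" where
  "chart_inv Y = Y ** P_perp + X ** matrix (perp_preimage Y)"

lemma chart_inv_mult:
  assumes "near_stratum Y"
  shows "chart_inv Y *v w = Y *v (w - P_ker *v w) + X *v perp_preimage Y w"
  using matrix_vector_mul(2)[OF linear_perp_preimage[OF assms]]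
  by (simp add: chart_inv_def matrix_vector_mult_add_rdistrib matrix_vector_mul_assoc[symmetric]
      P_perp_mult)

lemma chart_inv_chart:
  assumes H: "H \<in> tangent_space X" and Y: "near_stratum (chart H)"
  shows "chart_inv (chart H) = H"
proof -
  have "chart_inv (chart H) *v w = H *v w" for w
  proof -
    define g where "g = G *v (H *v (P_ker *v w))"
    have "perp_preimage (chart H) w = g"
      using Y G(1) by (intro perp_preimage_eq)
        (simp_all add: near_stratum_def g_def chart_mult P_ker_G P_ker_idem)
    moreover have "X *v g = H *v (P_ker *v w)"
      unfolding g_def by (rule X_G[OF tangent_space_mult_kernel[OF H P_ker_in_kernel]])
    ultimately show ?thesis
      by (simp add: chart_inv_mult[OF Y] chart_mult P_ker_diff matrix_vector_right_distrib[symmetric])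
  qed
  then show ?thesis by (simp add: matrix_eq)
qed

lemma chart_chart_inv:
  assumes Y: "near_stratum Y"
  shows "chart (chart_inv Y) = Y" "chart_inv Y \<in> tangent_space X"
proof -
  have n: "norm (Y - X) < \<mu>/2" using Y by (simp add: near_stratum_def)
  have zero: "perp_preimage Y v = 0" if "P_ker *v v = 0" for v
    using that by (intro perp_preimage_eq[OF n]) (simp_all add: subspace_0[OF subspace_orthogonal_comp[of "mat_kernel X"]])
  have idem: "perp_preimage Y (P_ker *v w) = perp_preimage Y w" for w
    using perp_preimage[OF Y] by (intro perp_preimage_eq[OF n]) (simp_all add: P_ker_idem)
  have "chart (chart_inv Y) *v w = Y *v w" for w
  proof -
    define \<xi> where "\<xi> = perp_preimage Y w"
    have \<xi>: "\<xi> \<in> (mat_kernel X)\<^sup>\<bottom>" "Y *v \<xi> = Y *v (P_ker *v w)"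
      unfolding \<xi>_def using perp_preimage[OF Y] by simp_all
    have "chart (chart_inv Y) *v w = Y *v (w - P_ker *v w) + Y *v \<xi>"
      using \<xi> G(2)[OF \<xi>(1)] by (simp add: chart_mult chart_inv_mult[OF Y] P_ker_diff P_ker_idem
          zero P_ker_perp idem \<xi>_def)
    then show ?thesis by (simp add: \<xi>(2) matrix_vector_right_distrib[symmetric])
  qed
  then show "chart (chart_inv Y) = Y" by (simp add: matrix_eq)
  show "chart_inv Y \<in> tangent_space X"
    using mat_image_perp_orthogonal
    by (auto simp: tangent_space_def chart_inv_mult[OF Y] P_ker_kernel inner_add_right)
qed

lemma chart_X: "chart X = X"
  by (simp add: matrix_eq chart_mult X_P_ker X_diff_P_ker)

lemma near_stratum_X: "near_stratum X"
  using \<mu>(1) rank by (simp add: near_stratum_def)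

lemma chart_inv_X: "chart_inv X = X"
proof -
  have "X \<in> tangent_space X" by (simp add: tangent_space_def mat_kernel_def)
  then show ?thesis using chart_inv_chart near_stratum_X chart_X by metis
qed

definition chart_inv_lip :: "real^'q^'p \<Rightarrow> real" where
  "chart_inv_lip Y0 = norm P_perp + norm X * (2/\<mu>) * (norm P_ker + (2/\<mu>) * norm Y0 * norm P_ker)"

lemma chart_inv_lip_nonneg: "chart_inv_lip Y0 \<ge> 0"
  using \<mu>(1) by (simp add: chart_inv_lip_def)

lemma norm_perp_preimage_diff_le:
  assumes Y: "near_stratum Y" and Y0: "near_stratum Y0"
  shows "norm (perp_preimage Y w - perp_preimage Y0 w)
    \<le> (2/\<mu>) * (norm (Y - Y0) * (norm P_ker * norm w + (2/\<mu>) * (norm Y0 * (norm P_ker * norm w))))"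
proof -
  define \<xi> \<xi>0 where "\<xi> = perp_preimage Y w" and "\<xi>0 = perp_preimage Y0 w"
  define nP where "nP = norm P_ker * norm w"
  have nPw: "norm (P_ker *v w) \<le> nP" unfolding nP_def by (rule norm_matrix_vector_mult_le)
  have "norm \<xi>0 \<le> (2/\<mu>) * norm (Y0 *v (P_ker *v w))"
    unfolding \<xi>0_def by (rule norm_perp_preimage_le[OF Y0])
  also have "\<dots> \<le> (2/\<mu>) * (norm Y0 * nP)"
    using \<mu>(1) norm_matrix_vector_mult_le[of Y0 "P_ker *v w"] mult_left_mono[OF nPw, of "norm Y0"]
    by (intro mult_left_mono) auto
  finally have n\<xi>0: "norm \<xi>0 \<le> (2/\<mu>) * (norm Y0 * nP)" .
  have "Y *v (\<xi> - \<xi>0) = (Y - Y0) *v (P_ker *v w - \<xi>0)"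
    using perp_preimage(2)[OF Y] perp_preimage(2)[OF Y0]
    by (simp add: \<xi>_def \<xi>0_def matrix_vector_mult_diff_rdistrib matrix_vector_right_distrib[symmetric]
        algebra_simps)
  then have "norm (Y *v (\<xi> - \<xi>0)) \<le> norm (Y - Y0) * norm (P_ker *v w - \<xi>0)"
    by (simp add: norm_matrix_vector_mult_le)
  also have "\<dots> \<le> norm (Y - Y0) * (nP + (2/\<mu>) * (norm Y0 * nP))"
    using norm_triangle_ineq4[of "P_ker *v w" \<xi>0] nPw n\<xi>0 by (intro mult_left_mono) auto
  finally have "norm (Y *v (\<xi> - \<xi>0)) \<le> norm (Y - Y0) * (nP + (2/\<mu>) * (norm Y0 * nP))" .
  moreover have "norm (\<xi> - \<xi>0) \<le> (2/\<mu>) * norm (Y *v (\<xi> - \<xi>0))"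
    using Y perp_preimage(1)[OF Y] perp_preimage(1)[OF Y0]
    by (intro norm_le_near subspace_diff[OF subspace_orthogonal_comp[of "mat_kernel X"]])
      (auto simp: near_stratum_def \<xi>_def \<xi>0_def)
  ultimately show ?thesis
    using \<mu>(1) unfolding \<xi>_def \<xi>0_def nP_def
    by (meson order.trans mult_left_mono less_imp_le zero_less_divide_iff zero_less_numeral)
qed

lemma norm_chart_inv_diff_le:
  assumes Y: "near_stratum Y" and Y0: "near_stratum Y0"
  shows "norm (chart_inv Y - chart_inv Y0) \<le> real CARD('p) * real CARD('q) * (norm (Y - Y0) * chart_inv_lip Y0)"
proof (rule norm_matrix_le_mult_bound)
  fix w
  define \<delta> where "\<delta> = perp_preimage Y w - perp_preimage Y0 w"
  have "(chart_inv Y - chart_inv Y0) *v w = (Y - Y0) *v (P_perp *v w) + X *v \<delta>"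
    by (simp add: chart_inv_mult[OF Y] chart_inv_mult[OF Y0] matrix_vector_mult_diff_rdistrib P_perp_mult
        matrix_vector_right_distrib[symmetric] \<delta>_def algebra_simps)
  then have "norm ((chart_inv Y - chart_inv Y0) *v w) \<le> norm ((Y - Y0) *v (P_perp *v w)) + norm X * norm \<delta>"
    using norm_triangle_ineq[of "(Y - Y0) *v (P_perp *v w)" "X *v \<delta>"] norm_matrix_vector_mult_le[of X \<delta>]
    by simp
  also have "\<dots> \<le> norm (Y - Y0) * (norm P_perp * norm w)
      + norm X * ((2/\<mu>) * (norm (Y - Y0) * (norm P_ker * norm w + (2/\<mu>) * (norm Y0 * (norm P_ker * norm w)))))"
    using norm_perp_preimage_diff_le[OF Y Y0, of w]
    by (intro add_mono order.trans[OF norm_matrix_vector_mult_le] mult_left_mono norm_matrix_vector_mult_le)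
      (simp_all add: \<delta>_def)
  also have "\<dots> = norm (Y - Y0) * chart_inv_lip Y0 * norm w"
    by (simp add: chart_inv_lip_def algebra_simps)
  finally show "norm ((chart_inv Y - chart_inv Y0) *v w) \<le> norm (Y - Y0) * chart_inv_lip Y0 * norm w" .
qed

lemma continuous_on_chart_inv: "continuous_on {Y. near_stratum Y} chart_inv"
proof (rule continuous_on_pointwise_lipschitz)
  fix Y Y0 assume "Y \<in> {Y. near_stratum Y}" "Y0 \<in> {Y. near_stratum Y}"
  then show "dist (chart_inv Y) (chart_inv Y0)
      \<le> (real CARD('p) * real CARD('q) * chart_inv_lip Y0) * dist Y Y0"
    using norm_chart_inv_diff_le[of Y Y0] by (simp add: dist_norm algebra_simps)
qed

definition chart_radius :: real where
  "chart_radius = (\<mu>/2) / (real CARD('p) * real CARD('q) * chart_inv_lip X + 1)"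

lemma chart_radius: "chart_radius > 0" "chart_radius \<le> \<mu>/2"
  "real CARD('p) * real CARD('q) * chart_inv_lip X * chart_radius < \<mu>/2"
proof -
  have "real CARD('p) * real CARD('q) * chart_inv_lip X \<ge> 0" using chart_inv_lip_nonneg by simp
  then show "chart_radius > 0" "chart_radius \<le> \<mu>/2"
    "real CARD('p) * real CARD('q) * chart_inv_lip X * chart_radius < \<mu>/2"
    using \<mu>(1) by (simp_all add: chart_radius_def field_simps)
qed

lemma norm_chart_inv_sub_X_less:
  assumes "near_stratum Y" "norm (Y - X) < chart_radius"
  shows "norm (chart_inv Y - X) < \<mu>/2"
proof -
  have "norm (chart_inv Y - X) \<le> real CARD('p) * real CARD('q) * chart_inv_lip X * norm (Y - X)"
    using norm_chart_inv_diff_le[OF assms(1) near_stratum_X] by (simp add: chart_inv_X ac_simps)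
  also have "\<dots> \<le> real CARD('p) * real CARD('q) * chart_inv_lip X * chart_radius"
    using assms(2) chart_inv_lip_nonneg by (intro mult_left_mono) auto
  finally show ?thesis using chart_radius(3) by linarith
qed

lemma local_param_chart:
  "\<exists>W V. local_param {Y. rank Y = r} (r * CARD('q) + (CARD('p) - r) * r) X (tangent_space X) W V chart"
proof -
  define V where "V = ball X chart_radius"
  define W where "W = ball X (\<mu>/2) \<inter> chart -` V"
  have near_V: "near_stratum Y" if "Y \<in> {Y. rank Y = r} \<inter> V" for Y
    using that chart_radius(2) by (auto simp: near_stratum_def V_def dist_norm norm_minus_commute)
  have near_W: "near_stratum (chart H)" if "H \<in> W" for H
    using that rank_chart chart_radius(2)
    by (auto simp: W_def near_stratum_def V_def dist_norm norm_minus_commute)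
  have chart_inv_W: "chart_inv Y \<in> W \<inter> tangent_space X" if Y: "Y \<in> {Y. rank Y = r} \<inter> V" for Y
    using norm_chart_inv_sub_X_less[OF near_V[OF Y]] chart_chart_inv[OF near_V[OF Y]] Y
    by (auto simp: W_def V_def dist_norm norm_minus_commute)
  have inj: "inj_on chart (W \<inter> tangent_space X)"
    by (rule inj_on_inverseI[where g = chart_inv]) (use chart_inv_chart near_W in blast)
  have "local_param {Y. rank Y = r} (r * CARD('q) + (CARD('p) - r) * r) X (tangent_space X) W V chart"
    unfolding local_param_def
  proof (intro conjI)
    show "open V" "X \<in> V" using chart_radius(1) by (simp_all add: V_def)
    show "smooth_on chart W"
      unfolding W_def V_def by (intro smooth_on_chart open_Int open_vimage continuous_on_chart) auto
    show "chart ` (W \<inter> tangent_space X) = {Y. rank Y = r} \<inter> V"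
    proof
      show "chart ` (W \<inter> tangent_space X) \<subseteq> {Y. rank Y = r} \<inter> V"
        using near_W by (auto simp: W_def near_stratum_def)
      show "{Y. rank Y = r} \<inter> V \<subseteq> chart ` (W \<inter> tangent_space X)"
        using chart_inv_W chart_chart_inv near_V by (metis image_eqI subsetI)
    qed
    have "continuous_on ({Y. rank Y = r} \<inter> V) chart_inv"
      by (rule continuous_on_subset[OF continuous_on_chart_inv]) (use near_V in blast)
    moreover have "inv_into (W \<inter> tangent_space X) chart Y = chart_inv Y" if "Y \<in> {Y. rank Y = r} \<inter> V" for Y
      by (rule inv_into_f_eq[OF inj chart_inv_W[OF that] chart_chart_inv(1)[OF near_V[OF that]]])
    ultimately show "continuous_on ({Y. rank Y = r} \<inter> V) (inv_into (W \<inter> tangent_space X) chart)"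
      using continuous_on_cong by (metis (no_types, lifting))
    show "\<forall>u\<in>W \<inter> tangent_space X. inj_on (frechet_derivative chart (at u)) (tangent_space X)"
      using chart_deriv_inj by (auto simp: frechet_derivative_chart W_def dist_norm norm_minus_commute)
  qed (use inj subspace_tangent_space dim_tangent_space in simp_all)
  then show ?thesis by blast
qed

end

lemma adapted_frame_exists:
  fixes X :: "real^'q^'p"
  assumes "rank X = r"
  shows "\<exists>B1 B2 C1 C2 G. adapted_frame X r B1 B2 C1 C2 G"
proof -
  have dR: "dim (mat_image X) = r" using assms by (simp add: rank_dim_range mat_image_def)
  have dV: "dim ((mat_kernel X)\<^sup>\<bottom>) = r" using assms dim_kernel_perp_eq_rank[of X] by simp
  have "dim (mat_kernel X) = CARD('q) - r"
    using dim_orthogonal_comp[OF subspace_orthogonal_comp, of "mat_kernel X"] dV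
      orthogonal_comp_self[OF subspace_mat_kernel[of X]] by simp
  moreover have "dim ((mat_image X)\<^sup>\<bottom>) = CARD('p) - r"
    using dim_orthogonal_comp[OF subspace_mat_image] dR by (metis add_diff_cancel_right')
  moreover obtain B1 B2 C1 C2 where
      "orthonormal B1" "span B1 = mat_image X" "card B1 = dim (mat_image X)"
      "orthonormal B2" "span B2 = (mat_image X)\<^sup>\<bottom>" "card B2 = dim ((mat_image X)\<^sup>\<bottom>)"
      "orthonormal C1" "span C1 = (mat_kernel X)\<^sup>\<bottom>" "card C1 = dim ((mat_kernel X)\<^sup>\<bottom>)"
      "orthonormal C2" "span C2 = mat_kernel X" "card C2 = dim (mat_kernel X)"
    using orthonormal_basis_of_subspace[OF subspace_mat_image]
      orthonormal_basis_of_subspace[OF subspace_orthogonal_comp]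
      orthonormal_basis_of_subspace[OF subspace_mat_kernel]
    by metis
  moreover obtain g where g: "range g \<subseteq> (mat_kernel X)\<^sup>\<bottom>" "linear g"
      "\<forall>v\<in>(mat_kernel X)\<^sup>\<bottom>. g (X *v v) = v"
    using linear_exists_left_inverse_on[OF matrix_vector_mul_linear subspace_orthogonal_comp inj_on_kernel_perp[of X]]
    by blast
  moreover have "matrix g *v y = g y" for y using matrix_vector_mul(2)[OF g(2)] by metis
  ultimately have "adapted_frame X r B1 B2 C1 C2 (matrix g)"
    using assms dR dV by unfold_locales auto
  then show ?thesis by blast
qed

section \<open>Minimality\<close>

lemma sandwich_expansion_bound:
  fixes E Y :: "real^'q^'p" and G :: "real^'p^'q"
  assumes quad: "norm (E - t *\<^sub>R Y) \<le> c * t\<^sup>2" and lin: "norm E \<le> c * \<bar>t\<bar>"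
  shows "\<bar>x \<bullet> (E *v (G *v (E *v w))) - t\<^sup>2 * (x \<bullet> (Y *v (G *v (Y *v w))))\<bar>
    \<le> norm x * norm G * norm w * c * (c + norm Y) * \<bar>t\<bar> ^ 3"
proof -
  define D where "D = E - t *\<^sub>R Y"
  define K where "K = norm x * norm G * norm w"
  have "K \<ge> 0" by (simp add: K_def)
  have "E = D + t *\<^sub>R Y" by (simp add: D_def)
  then have "x \<bullet> (E *v (G *v (E *v w))) - t\<^sup>2 * (x \<bullet> (Y *v (G *v (Y *v w))))
      = x \<bullet> (D *v (G *v (E *v w))) + t * (x \<bullet> (Y *v (G *v (D *v w))))"
    by (simp add: matrix_vector_mult_add_rdistrib matrix_vector_right_distrib inner_add_right
        scaleR_matrix_vector_assoc[symmetric] matrix_vector_mult_scaleR power2_eq_square algebra_simps)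
  moreover have "\<bar>x \<bullet> (D *v (G *v (E *v w)))\<bar> \<le> K * (c * t\<^sup>2 * (c * \<bar>t\<bar>))"
  proof -
    have "norm D * norm E \<le> c * t\<^sup>2 * (c * \<bar>t\<bar>)"
      using quad lin order.trans[OF norm_ge_zero quad] unfolding D_def by (intro mult_mono) auto
    then have "K * (norm D * norm E) \<le> K * (c * t\<^sup>2 * (c * \<bar>t\<bar>))"
      by (rule mult_left_mono) fact
    moreover have "\<bar>x \<bullet> (D *v (G *v (E *v w)))\<bar> \<le> K * (norm D * norm E)"
      using inner_matrix_vector_mult3_le[of x D G E w] by (simp add: K_def mult_ac)
    ultimately show ?thesis by linarith
  qed
  moreover have "\<bar>t * (x \<bullet> (Y *v (G *v (D *v w))))\<bar> \<le> \<bar>t\<bar> * (K * norm Y * (c * t\<^sup>2))"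
  proof -
    have "norm x * norm Y * norm G * norm D * norm w \<le> K * norm Y * (c * t\<^sup>2)"
      using mult_left_mono[OF quad[folded D_def], of "K * norm Y"] \<open>K \<ge> 0\<close> by (simp add: K_def mult_ac)
    then show ?thesis
      using inner_matrix_vector_mult3_le[of x Y G D w] unfolding abs_mult
      by (intro mult_left_mono) auto
  qed
  ultimately have "\<bar>x \<bullet> (E *v (G *v (E *v w))) - t\<^sup>2 * (x \<bullet> (Y *v (G *v (Y *v w))))\<bar>
      \<le> K * (c * t\<^sup>2 * (c * \<bar>t\<bar>)) + \<bar>t\<bar> * (K * norm Y * (c * t\<^sup>2))"
    using abs_triangle_ineq[of "x \<bullet> (D *v (G *v (E *v w)))" "t * (x \<bullet> (Y *v (G *v (D *v w))))"]
    by linarith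
  also have "\<dots> = K * c * (c + norm Y) * (t\<^sup>2 * \<bar>t\<bar>)"
    by (simp add: algebra_simps)
  also have "t\<^sup>2 * \<bar>t\<bar> = \<bar>t\<bar> ^ 3"
    by (cases "t \<ge> 0") (simp_all add: power2_eq_square power3_eq_cube)
  finally show ?thesis by (simp add: K_def)
qed

context adapted_frame
begin

text \<open>With \<open>E = Y - X\<close> and \<open>\<xi> \<bottom> ker X\<close> such that \<open>Y \<xi> = Y w\<close>, applying \<open>G\<close> to
  \<open>X \<xi> = E w - E \<xi>\<close> gives \<open>\<xi> = G E w - G E \<xi>\<close>; the difference below is then \<open>x \<bullet> E G E \<xi>\<close>,
  and \<open>|\<xi>| = O(|E| |w|)\<close>.\<close>

lemma rank_constraint_cubic:
  assumes Y: "norm (Y - X) < \<mu>/2" "rank Y = r" and x: "x \<in> (mat_image X)\<^sup>\<bottom>" and w: "w \<in> mat_kernel X"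
  shows "\<bar>x \<bullet> ((Y - X) *v w) - x \<bullet> ((Y - X) *v (G *v ((Y - X) *v w)))\<bar>
    \<le> (2/\<mu>) * norm x * norm G * norm w * norm (Y - X) ^ 3"
proof -
  define E where "E = Y - X"
  obtain \<xi> where \<xi>: "\<xi> \<in> (mat_kernel X)\<^sup>\<bottom>" "Y *v \<xi> = Y *v w"
    using image_kernel_perp_near[OF Y] by blast
  have Yw: "Y *v w = E *v w" using w by (simp add: E_def mat_kernel_def matrix_vector_mult_diff_rdistrib)
  have "X *v \<xi> = Y *v \<xi> - E *v \<xi>" by (simp add: E_def matrix_vector_mult_diff_rdistrib)
  with \<xi>(2) Yw have X\<xi>: "X *v \<xi> = E *v w - E *v \<xi>" by simp
  have "\<xi> = G *v (E *v w) - G *v (E *v \<xi>)"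
    using G(2)[OF \<xi>(1)] X\<xi> by (simp add: matrix_vector_mult_diff_distrib)
  from arg_cong[OF this, of "\<lambda>v. x \<bullet> (E *v v)"]
  have "x \<bullet> (E *v \<xi>) = x \<bullet> (E *v (G *v (E *v w))) - x \<bullet> (E *v (G *v (E *v \<xi>)))"
    by (simp add: matrix_vector_mult_diff_distrib inner_diff_right)
  moreover have "x \<bullet> (E *v w) = x \<bullet> (E *v \<xi>)"
    using X\<xi> mat_image_perp_orthogonal[OF x, of \<xi>] by (simp add: inner_diff_right)
  ultimately have "\<bar>x \<bullet> (E *v w) - x \<bullet> (E *v (G *v (E *v w)))\<bar> = \<bar>x \<bullet> (E *v (G *v (E *v \<xi>)))\<bar>"
    by simp
  also have "\<dots> \<le> norm x * norm E * norm G * norm E * norm \<xi>"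
    by (rule inner_matrix_vector_mult3_le)
  also have "\<dots> \<le> norm x * norm E * norm G * norm E * ((2/\<mu>) * (norm E * norm w))"
  proof (intro mult_left_mono)
    have "norm \<xi> \<le> (2/\<mu>) * norm (E *v w)"
      using norm_le_near[OF Y(1) \<xi>(1)] \<xi>(2) Yw by simp
    also have "\<dots> \<le> (2/\<mu>) * (norm E * norm w)"
      using \<mu>(1) by (intro mult_left_mono norm_matrix_vector_mult_le) simp
    finally show "norm \<xi> \<le> (2/\<mu>) * (norm E * norm w)" .
  qed simp
  also have "\<dots> = (2/\<mu>) * norm x * norm G * norm w * norm E ^ 3"
    by (simp add: power3_eq_cube mult_ac)
  finally show ?thesis by (simp add: E_def)
qed

lemma rank_constraint_bigo:
  fixes \<gamma> :: "real \<Rightarrow> real^'q^'p"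
  assumes rank: "\<forall>\<^sub>F t in at 0. rank (\<gamma> t) = r" and lin: "\<forall>\<^sub>F t in at 0. norm (\<gamma> t - X) \<le> c * \<bar>t\<bar>"
    and x: "x \<in> (mat_image X)\<^sup>\<bottom>" and w: "w \<in> mat_kernel X"
  shows "(\<lambda>t. x \<bullet> ((\<gamma> t - X) *v w) - x \<bullet> ((\<gamma> t - X) *v (G *v ((\<gamma> t - X) *v w)))) \<in> O[at 0](\<lambda>t. t ^ 3)"
proof (rule bigoI)
  have "((\<lambda>t. \<gamma> t - X) \<longlongrightarrow> 0) (at 0)"
    by (rule Lim_null_comparison[OF lin]) (auto intro!: tendsto_eq_intros)
  from tendstoD[OF this, of "\<mu>/2"] have "\<forall>\<^sub>F t in at 0. norm (\<gamma> t - X) < \<mu>/2"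
    using \<mu>(1) by (simp add: dist_norm)
  with rank lin show "\<forall>\<^sub>F t in at 0. norm (x \<bullet> ((\<gamma> t - X) *v w) - x \<bullet> ((\<gamma> t - X) *v (G *v ((\<gamma> t - X) *v w))))
      \<le> ((2/\<mu>) * norm x * norm G * norm w * c ^ 3) * norm (t ^ 3)"
  proof eventually_elim
    case (elim t)
    have "norm (x \<bullet> ((\<gamma> t - X) *v w) - x \<bullet> ((\<gamma> t - X) *v (G *v ((\<gamma> t - X) *v w))))
        \<le> (2/\<mu>) * norm x * norm G * norm w * norm (\<gamma> t - X) ^ 3"
      using rank_constraint_cubic[OF elim(3,1) x w] by simp
    also have "\<dots> \<le> (2/\<mu>) * norm x * norm G * norm w * (c * \<bar>t\<bar>) ^ 3"
      using \<mu>(1) by (intro mult_left_mono power_mono elim(2)) auto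
    also have "\<dots> = ((2/\<mu>) * norm x * norm G * norm w * c ^ 3) * norm (t ^ 3)"
      by (simp add: power_mult_distrib power_abs)
    finally show ?case .
  qed
qed

lemma second_order_rank_constraint:
  fixes \<gamma> :: "real \<Rightarrow> real^'q^'p"
  assumes taylor: "(\<lambda>t. norm (\<gamma> t - X - t *\<^sub>R Y1 - (t\<^sup>2/2) *\<^sub>R Y2)) \<in> o[at 0](\<lambda>t. t\<^sup>2)"
    and rank: "\<forall>\<^sub>F t in at 0. rank (\<gamma> t) = r"
    and x: "x \<in> (mat_image X)\<^sup>\<bottom>" and w: "w \<in> mat_kernel X"
  shows "x \<bullet> (Y1 *v w) = 0" "x \<bullet> (Y2 *v w) = 2 * (x \<bullet> (Y1 *v (G *v (Y1 *v w))))"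
proof -
  obtain c where "c \<ge> 0" and quad: "\<forall>\<^sub>F t in at 0. norm (\<gamma> t - X - t *\<^sub>R Y1) \<le> c * t\<^sup>2"
    and lin: "\<forall>\<^sub>F t in at 0. norm (\<gamma> t - X) \<le> c * \<bar>t\<bar>"
    using second_order_jet_bounds[OF taylor] by blast
  define g0 where "g0 = x \<bullet> (Y1 *v (G *v (Y1 *v w)))"
  define f1 where "f1 t = x \<bullet> ((\<gamma> t - X) *v w) - x \<bullet> ((\<gamma> t - X) *v (G *v ((\<gamma> t - X) *v w)))" for t
  define f2 where "f2 t = x \<bullet> ((\<gamma> t - X) *v (G *v ((\<gamma> t - X) *v w))) - t\<^sup>2 * g0" for t
  define f3 where "f3 t = x \<bullet> ((\<gamma> t - X - t *\<^sub>R Y1 - (t\<^sup>2/2) *\<^sub>R Y2) *v w)" for t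
  have cube: "(\<lambda>t::real. t ^ 3) \<in> o[at 0](\<lambda>t. t\<^sup>2)" by real_asymp
  have "f1 \<in> O[at 0](\<lambda>t. t ^ 3)"
    unfolding f1_def by (rule rank_constraint_bigo[OF rank lin x w])
  moreover have "f2 \<in> O[at 0](\<lambda>t. t ^ 3)"
    using quad lin
    by (intro bigoI[where c = "norm x * norm G * norm w * c * (c + norm Y1)"])
      (auto elim: eventually_elim2 dest: sandwich_expansion_bound simp: f2_def g0_def power_abs)
  moreover have "f3 \<in> o[at 0](\<lambda>t. t\<^sup>2)"
  proof (rule landau_o.big_small_trans[OF _ taylor])
    have "norm (f3 t) \<le> norm x * norm w * norm (norm (\<gamma> t - X - t *\<^sub>R Y1 - (t\<^sup>2/2) *\<^sub>R Y2))" for t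
      using inner_matrix_vector_mult_le[of x "\<gamma> t - X - t *\<^sub>R Y1 - (t\<^sup>2/2) *\<^sub>R Y2" w]
      by (simp add: f3_def mult_ac)
    then show "f3 \<in> O[at 0](\<lambda>t. norm (\<gamma> t - X - t *\<^sub>R Y1 - (t\<^sup>2/2) *\<^sub>R Y2))"
      by (intro bigoI always_eventually allI)
  qed
  ultimately have "(\<lambda>t. f1 t + f2 t - f3 t) \<in> o[at 0](\<lambda>t. t\<^sup>2)"
    using landau_o.big_small_trans[OF _ cube] by (intro sum_in_smallo) blast+
  moreover have "f1 t + f2 t - f3 t = t * (x \<bullet> (Y1 *v w)) + t\<^sup>2 * (x \<bullet> (Y2 *v w) / 2 - g0)" for t
    using w by (simp add: f1_def f2_def f3_def mat_kernel_def algebra_simps inner_add_right inner_diff_right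
        scaleR_matrix_vector_assoc[symmetric] matrix_vector_mult_scaleR)
  ultimately have "(\<lambda>t. t * (x \<bullet> (Y1 *v w)) + t\<^sup>2 * (x \<bullet> (Y2 *v w) / 2 - g0)) \<in> o[at 0](\<lambda>t. t\<^sup>2)"
    by simp
  from linear_plus_quadratic_smallo_imp_zero[OF this] show "x \<bullet> (Y1 *v w) = 0"
    "x \<bullet> (Y2 *v w) = 2 * (x \<bullet> (Y1 *v (G *v (Y1 *v w))))"
    by (simp_all add: g0_def)
qed

lemma outer_prod_orthogonal_tangent_space:
  assumes "H \<in> tangent_space X" "x \<in> (mat_image X)\<^sup>\<bottom>" "w \<in> mat_kernel X"
  shows "H \<bullet> outer_prod x w = 0"
  using assms by (simp add: inner_outer_prod tangent_space_def)

text \<open>Expanding \<open>G (e w)\<close> in the basis \<open>C1\<close> of \<open>(ker X)\<^sup>\<bottom>\<close> and applying Parseval in the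
  tangent space turns the sum into \<open>\<Sum>c\<in>C1. (x c\<^sup>T) \<bullet> ((G\<^sup>T c) w\<^sup>T)\<close>, whose terms carry the factor
  \<open>c \<bullet> w = 0\<close>.\<close>

lemma trace_sandwich_eq_0:
  assumes E: "orthonormal E" "span E = tangent_space X"
    and x: "x \<in> (mat_image X)\<^sup>\<bottom>" and w: "w \<in> mat_kernel X"
  shows "(\<Sum>e\<in>E. x \<bullet> (e *v (G *v (e *v w)))) = 0"
proof -
  have C1_perp: "c \<in> (mat_kernel X)\<^sup>\<bottom>" if "c \<in> C1" for c
    using that C1(2) span_superset by blast
  have expand: "x \<bullet> (e *v (G *v (e *v w)))
      = (\<Sum>c\<in>C1. (e \<bullet> outer_prod x c) * (e \<bullet> outer_prod (c v* G) w))" for e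
  proof -
    define g where "g = G *v (e *v w)"
    have "g = (\<Sum>c\<in>C1. (c \<bullet> g) *\<^sub>R c)"
      using orthonormal_expand[OF C1(1)] G(1) C1(2) by (simp add: g_def)
    then have "e *v g = e *v (\<Sum>c\<in>C1. (c \<bullet> g) *\<^sub>R c)" by (rule arg_cong)
    also have "\<dots> = (\<Sum>c\<in>C1. (c \<bullet> g) *\<^sub>R (e *v c))"
      by (simp add: vec.sum matrix_vector_mult_scaleR)
    finally have "x \<bullet> (e *v (G *v (e *v w))) = (\<Sum>c\<in>C1. (c \<bullet> (G *v (e *v w))) * (x \<bullet> (e *v c)))"
      by (simp add: g_def inner_sum_right)
    then show ?thesis by (simp add: inner_outer_prod dot_lmul_matrix mult.commute)
  qed
  have "(\<Sum>e\<in>E. x \<bullet> (e *v (G *v (e *v w))))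
      = (\<Sum>c\<in>C1. \<Sum>e\<in>E. (e \<bullet> outer_prod x c) * (e \<bullet> outer_prod (c v* G) w))"
    unfolding expand by (rule sum.swap)
  also have "\<dots> = (\<Sum>c\<in>C1. outer_prod x c \<bullet> outer_prod (c v* G) w)"
  proof (rule sum.cong[OF refl])
    fix c assume "c \<in> C1"
    then have "outer_prod x c \<in> span E"
      using C1_perp E(2) by (simp add: outer_prod_in_tangent_space)
    then show "(\<Sum>e\<in>E. (e \<bullet> outer_prod x c) * (e \<bullet> outer_prod (c v* G) w))
        = outer_prod x c \<bullet> outer_prod (c v* G) w"
      by (rule orthonormal_parseval[OF E(1)])
  qed
  also have "\<dots> = 0"
    using C1_perp w by (intro sum.neutral) (auto simp: inner_outer_prod_outer_prod orthogonal_comp_def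
        orthogonal_def inner_commute)
  finally show ?thesis .
qed

lemma local_param_second_order:
  assumes param: "local_param {Y. rank Y = r} d x0 S W V \<phi>" and u: "u \<in> W \<inter> S" "\<phi> u = X"
    and a: "a \<in> S" and x: "x \<in> (mat_image X)\<^sup>\<bottom>" and w: "w \<in> mat_kernel X"
  shows "x \<bullet> (frechet_derivative \<phi> (at u) a *v w) = 0"
    "x \<bullet> (second_deriv \<phi> u a a *v w)
      = 2 * (x \<bullet> (frechet_derivative \<phi> (at u) a *v (G *v (frechet_derivative \<phi> (at u) a *v w))))"
proof -
  have S: "subspace S" and "open W" and C2: "Ck_on 2 \<phi> W"
    and img: "\<phi> ` (W \<inter> S) = {Y. rank Y = r} \<inter> V"
    using param by (auto simp: local_param_def smooth_on_def)
  have "((\<lambda>t. u + t *\<^sub>R a) \<longlongrightarrow> u + 0 *\<^sub>R a) (at 0)" by (intro tendsto_intros)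
  then have "\<forall>\<^sub>F t in at 0. u + t *\<^sub>R a \<in> W"
    using topological_tendstoD[OF _ \<open>open W\<close>, of _ "u + 0 *\<^sub>R a"] u by simp
  moreover have line_S: "u + t *\<^sub>R a \<in> S" for t using S u a by (simp add: subspace_add subspace_scale)
  ultimately have "\<forall>\<^sub>F t in at 0. \<phi> (u + t *\<^sub>R a) \<in> \<phi> ` (W \<inter> S)"
    by (auto elim: eventually_mono)
  then have rank: "\<forall>\<^sub>F t in at 0. rank (\<phi> (u + t *\<^sub>R a)) = r"
    unfolding img by (rule eventually_mono) simp
  have taylor: "(\<lambda>t. norm (\<phi> (u + t *\<^sub>R a) - X - t *\<^sub>R frechet_derivative \<phi> (at u) a
      - (t\<^sup>2/2) *\<^sub>R second_deriv \<phi> u a a)) \<in> o[at 0](\<lambda>t. t\<^sup>2)"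
    using taylor2_along_line[OF C2 \<open>open W\<close>, of u a] u by simp
  from second_order_rank_constraint[OF taylor rank x w]
  show "x \<bullet> (frechet_derivative \<phi> (at u) a *v w) = 0"
    "x \<bullet> (second_deriv \<phi> u a a *v w)
      = 2 * (x \<bullet> (frechet_derivative \<phi> (at u) a *v (G *v (frechet_derivative \<phi> (at u) a *v w))))"
    by simp_all
qed

lemma local_param_tangent_space:
  assumes param: "local_param {Y. rank Y = r} (r * CARD('q) + (CARD('p) - r) * r) x0 S W V \<phi>"
    and u: "u \<in> W \<inter> S" "\<phi> u = X"
  shows "frechet_derivative \<phi> (at u) ` S = tangent_space X"
proof (rule subspace_dim_equal)
  have S: "subspace S" and inj: "inj_on (frechet_derivative \<phi> (at u)) S"
    and dimS: "dim S = r * CARD('q) + (CARD('p) - r) * r" and "open W" and "smooth_on \<phi> W"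
    using param u by (auto simp: local_param_def smooth_on_def)
  then have "Ck_on (Suc 0) \<phi> W" unfolding smooth_on_def by blast
  then have "\<phi> differentiable_on W" by simp
  then have lin: "linear (frechet_derivative \<phi> (at u))"
    using u \<open>open W\<close> frechet_derivative_works_on_open has_derivative_linear by blast
  show "subspace (frechet_derivative \<phi> (at u) ` S)"
    by (rule linear_subspace_image[OF lin S])
  show "subspace (tangent_space X)" by (rule subspace_tangent_space)
  show "frechet_derivative \<phi> (at u) ` S \<subseteq> tangent_space X"
    using local_param_second_order(1)[OF param u] by (auto simp: tangent_space_def)
  have "span S = S" using S by (simp add: span_eq_iff)
  with inj have "inj_on (frechet_derivative \<phi> (at u)) (span S)" by (simp only:)
  then have "dim (frechet_derivative \<phi> (at u) ` S) = dim S" by (rule dim_image_eq[OF lin])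
  then show "dim (tangent_space X) \<le> dim (frechet_derivative \<phi> (at u) ` S)"
    using dimS dim_tangent_space by simp
qed

lemma sum_normal_part_in_tangent_space:
  assumes param: "local_param {Y. rank Y = r} d x0 S W V \<phi>" and u: "u \<in> W \<inter> S" "\<phi> u = X"
    and A: "A \<subseteq> S" "inj_on (frechet_derivative \<phi> (at u)) A"
    and E: "orthonormal (frechet_derivative \<phi> (at u) ` A)"
      "span (frechet_derivative \<phi> (at u) ` A) = tangent_space X"
  shows "(\<Sum>a\<in>A. normal_part (tangent_space X) (second_deriv \<phi> u a a)) \<in> tangent_space X"
proof (rule tangent_spaceI)
  fix x w assume x: "x \<in> (mat_image X)\<^sup>\<bottom>" and w: "w \<in> mat_kernel X"
  define D where "D = frechet_derivative \<phi> (at u)"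
  have "normal_part (tangent_space X) (second_deriv \<phi> u a a) \<bullet> outer_prod x w
      = x \<bullet> (second_deriv \<phi> u a a *v w)" for a
    using outer_prod_orthogonal_tangent_space[OF normal_part(1)[OF subspace_tangent_space] x w]
    by (simp add: inner_outer_prod matrix_vector_mult_diff_rdistrib inner_diff_right)
  then have "x \<bullet> ((\<Sum>a\<in>A. normal_part (tangent_space X) (second_deriv \<phi> u a a)) *v w)
      = (\<Sum>a\<in>A. x \<bullet> (second_deriv \<phi> u a a *v w))"
    by (simp add: inner_outer_prod[symmetric] inner_sum_left)
  also have "\<dots> = 2 * (\<Sum>a\<in>A. x \<bullet> (D a *v (G *v (D a *v w))))"
    unfolding sum_distrib_left using local_param_second_order(2)[OF param u _ x w] A(1)
    by (intro sum.cong) (auto simp: D_def)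
  also have "(\<Sum>a\<in>A. x \<bullet> (D a *v (G *v (D a *v w)))) = (\<Sum>e\<in>D ` A. x \<bullet> (e *v (G *v (e *v w))))"
    using A(2) by (simp add: sum.reindex D_def)
  also have "\<dots> = 0" using trace_sandwich_eq_0[OF E x w] by (simp add: D_def)
  finally show "x \<bullet> ((\<Sum>a\<in>A. normal_part (tangent_space X) (second_deriv \<phi> u a a)) *v w) = 0"
    by simp
qed

lemma mean_curvature_eq_0:
  assumes param: "local_param {Y. rank Y = r} (r * CARD('q) + (CARD('p) - r) * r) x0 S W V \<phi>"
    and u: "u \<in> W \<inter> S" "\<phi> u = X"
    and A: "finite A" "A \<subseteq> S" "card A = r * CARD('q) + (CARD('p) - r) * r"
      "inj_on (frechet_derivative \<phi> (at u)) A"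
      "pairwise orthogonal (frechet_derivative \<phi> (at u) ` A)"
      "\<forall>a\<in>A. norm (frechet_derivative \<phi> (at u) a) = 1"
  shows "(\<Sum>a\<in>A. normal_part (frechet_derivative \<phi> (at u) ` S) (second_deriv \<phi> u a a)) = 0"
proof -
  define D where "D = frechet_derivative \<phi> (at u)"
  define N where "N = (\<Sum>a\<in>A. normal_part (tangent_space X) (second_deriv \<phi> u a a))"
  have E: "orthonormal (D ` A)" using A by (simp add: orthonormal_def D_def)
  have "D ` A \<subseteq> tangent_space X"
    using A(2) local_param_tangent_space[OF param u] by (auto simp: D_def)
  moreover have "card (D ` A) = dim (tangent_space X)"
    using A(3,4) by (simp add: card_image D_def dim_tangent_space)
  ultimately have "span (D ` A) = tangent_space X"
    using E subspace_tangent_space by (intro span_orthonormal_eq)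
  with E have "N \<in> tangent_space X"
    unfolding N_def D_def by (intro sum_normal_part_in_tangent_space[OF param u A(2,4)])
  moreover have "N \<bullet> t = 0" if "t \<in> tangent_space X" for t
    using normal_part(2)[OF subspace_tangent_space that] by (simp add: N_def inner_sum_left)
  ultimately have "N = 0" by (metis inner_eq_zero_iff)
  then show ?thesis
    using local_param_tangent_space[OF param u] by (simp add: N_def)
qed

end

theorem theorem1:
  fixes r :: nat
  assumes "CARD('p::finite) \<ge> CARD('q::finite)"
    and "r < CARD('q)"
  shows "(\<exists>d. regular_submanifold {X :: real^'q^'p. rank X = r} d) \<and>
         minimal_submanifold {X :: real^'q^'p. rank X = r}"
proof -
  define d where "d = r * CARD('q) + (CARD('p) - r) * r"
  have reg: "regular_submanifold {X :: real^'q^'p. rank X = r} d"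
    unfolding regular_submanifold_def d_def
    using adapted_frame_exists adapted_frame.local_param_chart by fastforce
  have "minimal_submanifold {X :: real^'q^'p. rank X = r}"
    unfolding minimal_submanifold_def
  proof (intro exI conjI allI impI)
    show "regular_submanifold {X :: real^'q^'p. rank X = r} d" by (rule reg)
    fix x S W V \<phi> u A
    assume H: "local_param {X :: real^'q^'p. rank X = r} d x S W V \<phi> \<and> u \<in> W \<inter> S \<and>
        finite A \<and> A \<subseteq> S \<and> card A = d \<and> inj_on (frechet_derivative \<phi> (at u)) A \<and>
        pairwise orthogonal (frechet_derivative \<phi> (at u) ` A) \<and>
        (\<forall>a\<in>A. norm (frechet_derivative \<phi> (at u) a) = 1)"
    then have "rank (\<phi> u) = r" unfolding local_param_def by blast
    with adapted_frame_exists obtain B1 B2 C1 C2 G where "adapted_frame (\<phi> u) r B1 B2 C1 C2 G" by blast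
    from adapted_frame.mean_curvature_eq_0[OF this, of x S W V \<phi> u A] H
    show "(\<Sum>a\<in>A. normal_part (frechet_derivative \<phi> (at u) ` S) (second_deriv \<phi> u a a)) = 0"
      by (simp add: d_def)
  qed
  with reg show ?thesis by blast
qed

end
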